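(* Let $\boldsymbol\pi=(\boldsymbol\pi_s)_{s\in\mathbb N}$ be a sequence of coordinatewise permutations ($\boldsymbol\pi_s(\mathbf m)=(\pi^1_s(m^1),\dots,\pi^d_s(m^d))$ with $\pi^j_s$ permutations of $\{0,\dots,2^{m_s}-1\}$), let $F^{\boldsymbol\pi}$ be as in the context, and let $G\subset\mathbb G^d$ be open with $G\cap F^{\boldsymbol\pi}\neq\emptyset$. Then $G\cap F^{\boldsymbol\pi}$ is an $M$-set for the $d$-dimensional Walsh system with respect to convergence by rectangles, by cubes, and repeated convergence for every order of iterated summation. Moreover there is a dyadic cube $\Delta^{(m_{s_0})}\subset G$ (of rank $m_{s_0}$ for some $s_0$) such that the $d$-fold Walsh series generating the quasimeasure $\tau_{F^{\boldsymbol\pi}}|_{\Delta^{(m_{s_0})}}$ realizes the $M$-set $G\cap F^{\boldsymbol\pi}$.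
   Context: Fix an integer $d\ge 2$. $\mathbb G$ is the dyadic group: sequences $g=(g_k)_{k\ge0}$, $g_k\in\{0,1\}$, coordinatewise addition mod 2, product topology (basis: dyadic cubes); $\mathbb G^d$ its $d$-th power. For $n\in\mathbb N_0$, $n=\sum_kn_k2^k$, $n_k\in\{0,1\}$. Dyadic interval of rank $k$: $\Delta^{(k)}_m=\{g: g_t=m_{k-1-t},\ 0\le t<k\}$; dyadic cube $\Delta^{(k)}_{\mathbf m}=\prod_l\Delta^{(k)}_{m^l}$. Vector order coordinatewise, $\mathbf 1=(1,\dots,1)$. Walsh functions $W_n(g)=\prod_k(-1)^{g_kn_k}$, $W_{\mathbf n}(\mathbf g)=\prod_lW_{n^l}(g^l)$; $W^{(k)}_{\mathbf n\mathbf m}$ is the constant value of $W_{\mathbf n}$ on $\Delta^{(k)}_{\mathbf m}$ ($\mathbf n,\mathbf m<2^k\mathbf 1$); $R_{k\mathbf 1}:=W_{2^k\mathbf 1}$. Partial sums $S_{\mathbf N}=\sum_{\mathbf n<\mathbf N}a_{\mathbf n}W_{\mathbf n}$; convergence by rectangles: $S_{\mathbf N}(\mathbf g)\to S$ as $\min_jN^j\to\infty$; by cubes: $S_{N\mathbf 1}(\mathbf g)\to S$; repeated: the iterated sum $\sum_{n^{j_1}}(\cdots\sum_{n^{j_d}}a_{\mathbf n}W_{\mathbf n}(\mathbf g))$ converges to $S$ for the permutation $(j_1,\dots,j_d)$. $A$ is an $M$-set if some series with not all coefficients zero converges to $0$ at every point outside $A$; such a series realizes $A$. Quasimeasure: $\tau$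 on dyadic cubes with $\tau(\Delta^{(k)}_{\mathbf m})=\sum_{\boldsymbol\sigma\in\{0,1\}^d}\tau(\Delta^{(k+1)}_{2\mathbf m+\boldsymbol\sigma})$; its generating series is $\sum\widehat\tau_{\mathbf n}W_{\mathbf n}$ with $\widehat\tau_{\mathbf n}=\sum_{\mathbf m<2^k\mathbf 1}W^{(k)}_{\mathbf n\mathbf m}\tau(\Delta^{(k)}_{\mathbf m})$ ($\mathbf n<2^k\mathbf 1$). For nonempty closed $E$, $\tau_E$ is the unique nonnegative quasimeasure with $\tau_E(\mathbb G^d)=1$, $\tau_E(\Delta)=0$ iff $\Delta\cap E=\emptyset$, which splits the value of a cube meeting $E$ equally among its $2^d$ children meeting $E$. The restriction to a dyadic cube $\widetilde\Delta$ is $\tau|_{\widetilde\Delta}(\Delta)=\tau(\widetilde\Delta\cap\Delta)$ (with value $0$ on $\emptyset$). Let $m_1=0$, $m_{s+1}=2(2m_s+1)$; $F^{\boldsymbol\pi}_s=\bigcup_{\mathbf m,\mathbf m'<2^{m_s}\mathbf 1}\{\mathbf g\in\Delta^{(2m_s)}_{2^{m_s}\mathbf m+\mathbf m'}: R_{2m_s\mathbf 1}(\mathbf g)=W^{(m_s)}_{\boldsymbol\pi_s(\mathbf m)\,\mathbf m'}\}$, $F^{\boldsymbol\pi}=\bigcap_sF^{\boldsymbol\pi}_s$. *)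

theory Defs
  imports Complex_Main
begin

text \<open>Points of the dyadic group G are 0/1-sequences, encoded as nat => bool
  (True = 1).  Points of G^d are 'd => nat => bool for a finite index type 'd
  with CARD('d) = d.  Multi-indices are 'd => nat.\<close>

type_synonym 'd pt = "'d \<Rightarrow> nat \<Rightarrow> bool"
type_synonym 'd idx = "'d \<Rightarrow> nat"

definition dint :: "nat \<Rightarrow> nat \<Rightarrow> (nat \<Rightarrow> bool) set" where
  "dint k m = {g. \<forall>t<k. g t = bit m (k - 1 - t)}"

definition dcube :: "nat \<Rightarrow> 'd idx \<Rightarrow> 'd pt set" where
  "dcube k m = {g. \<forall>l. g l \<in> dint k (m l)}"

definition idx_below :: "nat \<Rightarrow> 'd idx set" where
  "idx_below k = {m. \<forall>l. m l < 2 ^ k}"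

text \<open>Open sets of G^d: the product topology, generated by the dyadic cubes.\<close>
definition open_dyadic :: "'d pt set \<Rightarrow> bool" where
  "open_dyadic U \<longleftrightarrow> (\<forall>g\<in>U. \<exists>k m. m \<in> idx_below k \<and> g \<in> dcube k m \<and> dcube k m \<subseteq> U)"

definition walsh :: "nat \<Rightarrow> (nat \<Rightarrow> bool) \<Rightarrow> real" where
  "walsh n g = (\<Prod>k\<in>{k. bit n k}. if g k then -1 else 1)"

definition walshv :: "'d::finite idx \<Rightarrow> 'd pt \<Rightarrow> real" where
  "walshv n g = (\<Prod>l\<in>UNIV. walsh (n l) (g l))"

definition cube_pt :: "nat \<Rightarrow> 'd idx \<Rightarrow> 'd pt" where
  "cube_pt k m = (\<lambda>l t. t < k \<and> bit (m l) (k - 1 - t))"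

text \<open>W^{(k)}_{n m}: the (constant) value of W_n on Delta^{(k)}_m.\<close>
definition walsh_const :: "nat \<Rightarrow> 'd::finite idx \<Rightarrow> 'd idx \<Rightarrow> real" where
  "walsh_const k n m = walshv n (cube_pt k m)"

definition rad :: "nat \<Rightarrow> 'd::finite pt \<Rightarrow> real" where
  "rad k g = walshv (\<lambda>_. 2 ^ k) g"

definition psum :: "('d::finite idx \<Rightarrow> real) \<Rightarrow> 'd idx \<Rightarrow> 'd pt \<Rightarrow> real" where
  "psum a N g = (\<Sum>n\<in>{n. \<forall>l. n l < N l}. a n * walshv n g)"

definition conv_rect :: "('d::finite idx \<Rightarrow> real) \<Rightarrow> 'd pt \<Rightarrow> real \<Rightarrow> bool" where
  "conv_rect a g S \<longleftrightarrow>
     (\<forall>\<epsilon>>0. \<exists>K. \<forall>N. (\<forall>l. K \<le> N l) \<longrightarrow> \<bar>psum a N g - S\<bar> < \<epsilon>)"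

definition conv_cube :: "('d::finite idx \<Rightarrow> real) \<Rightarrow> 'd pt \<Rightarrow> real \<Rightarrow> bool" where
  "conv_cube a g S \<longleftrightarrow> (\<lambda>N. psum a (\<lambda>_. N) g) \<longlonglongrightarrow> S"

text \<open>Iterated summation: the first coordinate in the list is the outermost sum.
  Each step fixes one coordinate; when all coordinates are fixed the summand is
  constant.\<close>
fun iter_sum :: "'d list \<Rightarrow> ('d idx \<Rightarrow> real) \<Rightarrow> real \<Rightarrow> bool" where
  "iter_sum [] f S \<longleftrightarrow> S = f (\<lambda>_. 0)"
| "iter_sum (j # js) f S \<longleftrightarrow>
     (\<exists>T. (\<forall>k. iter_sum js (\<lambda>n. f (n(j := k))) (T k)) \<and> T sums S)"

definition conv_rep :: "'d list \<Rightarrow> ('d::finite idx \<Rightarrow> real) \<Rightarrow> 'd pt \<Rightarrow> real \<Rightarrow> bool" where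
  "conv_rep js a g S \<longleftrightarrow> iter_sum js (\<lambda>n. a n * walshv n g) S"

definition realizes ::
  "(('d idx \<Rightarrow> real) \<Rightarrow> 'd pt \<Rightarrow> real \<Rightarrow> bool) \<Rightarrow> ('d idx \<Rightarrow> real) \<Rightarrow> 'd pt set \<Rightarrow> bool" where
  "realizes conv a A \<longleftrightarrow> (\<exists>n. a n \<noteq> 0) \<and> (\<forall>g. g \<notin> A \<longrightarrow> conv a g 0)"

definition M_set ::
  "(('d idx \<Rightarrow> real) \<Rightarrow> 'd pt \<Rightarrow> real \<Rightarrow> bool) \<Rightarrow> 'd pt set \<Rightarrow> bool" where
  "M_set conv A \<longleftrightarrow> (\<exists>a. realizes conv a A)"

text \<open>Quasimeasures are functions of (rank k, index m) giving tau(Delta^{(k)}_m).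
  tau_E: value 1 on the whole space, 0 on cubes missing E, and the value of a
  cube meeting E is split equally among its children meeting E.\<close>
definition parent :: "'d idx \<Rightarrow> 'd idx" where
  "parent m = (\<lambda>l. m l div 2)"

definition children :: "'d idx \<Rightarrow> 'd idx set" where
  "children p = {(\<lambda>l. 2 * p l + \<sigma> l) | \<sigma>. \<forall>l. \<sigma> l < 2}"

fun tauE :: "'d pt set \<Rightarrow> nat \<Rightarrow> 'd idx \<Rightarrow> real" where
  "tauE E 0 m = (if dcube 0 m \<inter> E = {} then 0 else 1)"
| "tauE E (Suc k) m =
     (if dcube (Suc k) m \<inter> E = {} then 0
      else tauE E k (parent m) /
             card {c \<in> children (parent m). dcube (Suc k) c \<inter> E \<noteq> {}})"

text \<open>Restriction tau|_{Delta^{(k0)}_{m0}}(Delta) = tau(Delta^{(k0)}_{m0} \<inter> Delta),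
  0 when the intersection is empty (a nonempty intersection of dyadic cubes is
  the one of larger rank).\<close>
definition qm_restrict ::
  "(nat \<Rightarrow> 'd idx \<Rightarrow> real) \<Rightarrow> nat \<Rightarrow> 'd idx \<Rightarrow> nat \<Rightarrow> 'd idx \<Rightarrow> real" where
  "qm_restrict \<tau> k0 m0 k m =
     (if dcube k0 m0 \<inter> dcube k m = {} then 0
      else if k0 \<le> k then \<tau> k m else \<tau> k0 m0)"

definition qm_coeff :: "(nat \<Rightarrow> 'd::finite idx \<Rightarrow> real) \<Rightarrow> 'd idx \<Rightarrow> real" where
  "qm_coeff \<tau> n =
     (let k = (LEAST k. n \<in> idx_below k)
      in \<Sum>m\<in>idx_below k. walsh_const k n m * \<tau> k m)"

text \<open>m_1 = 0, m_{s+1} = 2(2 m_s + 1) (indices s \<ge> 1; the value at 0 is a dummy).\<close>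
fun m_seq :: "nat \<Rightarrow> nat" where
  "m_seq 0 = 0"
| "m_seq (Suc 0) = 0"
| "m_seq (Suc (Suc s)) = 2 * (2 * m_seq (Suc s) + 1)"

text \<open>pi s l is the permutation pi^l_s; pi_s(m) = (pi^l_s(m^l))_l.\<close>
definition F_s :: "(nat \<Rightarrow> 'd \<Rightarrow> nat \<Rightarrow> nat) \<Rightarrow> nat \<Rightarrow> 'd::finite pt set" where
  "F_s \<pi> s = (\<Union>m\<in>idx_below (m_seq s). \<Union>m'\<in>idx_below (m_seq s).
      {g \<in> dcube (2 * m_seq s) (\<lambda>l. 2 ^ m_seq s * m l + m' l).
         rad (2 * m_seq s) g = walsh_const (m_seq s) (\<lambda>l. \<pi> s l (m l)) m'})"

definition F_pi :: "(nat \<Rightarrow> 'd \<Rightarrow> nat \<Rightarrow> nat) \<Rightarrow> 'd::finite pt set" where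
  "F_pi \<pi> = (\<Inter>s\<in>{1..}. F_s \<pi> s)"

end

(* Fix a dyadic cube D = dcube k0 m0 inside G that meets F, with k0 = m_s0.  The Riesz products
     P_T = 1_D * prod_(t=1..T) (1 + R_(2 m_t) * W_(2^m_t pi_t(m)))     (m: the first m_t digits)
   equal 2^T on the intersection of D with F_1, ..., F_T and vanish elsewhere.  At the rank 2 m_t
   exactly half of the children of a cube meeting F meet F again, so the mass tau_F gives a cube is
   the mean of P_T over it; hence the n-th coefficient of the series generating tau_F restricted to D
   is the n-th Walsh coefficient of P_T for all large T.  If 2^(2 m_(r+1)) < min N <= 2^(2 m_(r+2)),
   the rectangular partial sum S_N(g) equals P_r(g) plus products of Walsh-Dirichlet kernels, which
   are O(2^-r) because pi_(r+1) is injective.  Outside the intersection of D and F, P_r(g) = 0 for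
   large r, so S_N(g) -> 0.  Cubes are a special case of rectangles, and once one index is fixed only
   finitely many coefficients are nonzero, so the outer partial sums of an iterated series are
   rectangular partial sums.  Finally the constant coefficient tau_F(D) is positive. *)

theory Submission
  imports Defs "HOL-Library.FuncSet"
begin

unbundle bit_operations_syntax

lemma sum_lessThan_add: "(\<Sum>i<m + (n::nat). f i) = (\<Sum>i<m. f i) + (\<Sum>i<n. f (m + i))"
  by (induction n) (auto simp: ac_simps)

lemma bit_imp_pow2_le_nat: "bit (n::nat) k \<Longrightarrow> 2 ^ k \<le> n"
  by (rule ccontr) (simp add: bit_iff_odd)

lemma finite_bit_set_nat: "finite {k. bit (n::nat) k}"
  by (rule finite_subset[of _ "{..<n}"])
     (auto dest!: bit_imp_pow2_le_nat intro: less_le_trans[OF less_exp])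

lemma bit_imp_less_of_less_pow2: "(n::nat) < 2 ^ M \<Longrightarrow> bit n k \<Longrightarrow> k < M"
  using bit_imp_pow2_le_nat[of n k] by (metis le_less_trans nat_power_less_imp_less zero_less_numeral)

lemma pow2_le_imp_high_bit: "2 ^ M \<le> (n::nat) \<Longrightarrow> \<exists>k\<ge>M. bit n k"
proof -
  assume "2 ^ M \<le> n"
  then have "drop_bit M n \<noteq> 0" by (simp add: drop_bit_eq_div div_greater_zero_iff)
  then obtain j where "bit (drop_bit M n) j" using bit_eq_iff[of "drop_bit M n" 0] by auto
  then show ?thesis by (auto simp: bit_drop_bit_eq intro!: exI[of _ "M + j"])
qed

lemma bit_pow2_mult: "bit (2 ^ M * (p::nat)) k \<longleftrightarrow> M \<le> k \<and> bit p (k - M)"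
proof -
  have "2 ^ M * p = push_bit M p" by (simp add: push_bit_eq_mult)
  then show ?thesis by (simp add: bit_push_bit_iff_nat)
qed

lemma pow2_mult_and_eq_0: "(r::nat) < 2 ^ M \<Longrightarrow> (2 ^ M * p) AND r = 0"
  by (rule bit_eqI) (auto simp: bit_and_iff bit_pow2_mult dest: bit_imp_less_of_less_pow2)

lemma bit_div_pow2: "bit ((j::nat) div 2 ^ M) b = bit j (M + b)"
  by (simp flip: drop_bit_eq_div add: bit_drop_bit_eq)

lemma xor_pow2_div: "((j::nat) XOR 2 ^ q) div 2 ^ Suc q = j div 2 ^ Suc q"
proof -
  have "drop_bit (Suc q) (j XOR 2 ^ q) = drop_bit (Suc q) j"
    by (rule bit_eqI) (auto simp: bit_drop_bit_eq bit_xor_iff bit_exp_iff)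
  then show ?thesis by (simp add: drop_bit_eq_div)
qed

lemma prod_eq_pm1:
  fixes f :: "'a \<Rightarrow> real"
  assumes "finite A" "\<And>x. x \<in> A \<Longrightarrow> f x = 1 \<or> f x = -1"
  shows "prod f A = 1 \<or> prod f A = -1"
  using assms by (induction A rule: finite_induct) (auto, metis+)

section \<open>Walsh functions\<close>

definition bool_sign :: "bool \<Rightarrow> real" where
  "bool_sign b = (if b then -1 else 1)"

lemma bool_sign_sq [simp]: "bool_sign b * bool_sign b = 1"
  by (simp add: bool_sign_def)

lemma walsh_eq_prod_bool_sign: "walsh n x = (\<Prod>k\<in>{k. bit n k}. bool_sign (x k))"
  by (simp add: walsh_def bool_sign_def)

lemma walsh_eq_pm1: "walsh n x = 1 \<or> walsh n x = -1"
  unfolding walsh_eq_prod_bool_sign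
  by (rule prod_eq_pm1[OF finite_bit_set_nat]) (simp add: bool_sign_def)

lemma walsh_abs [simp]: "\<bar>walsh n x\<bar> = 1"
  using walsh_eq_pm1[of n x] by auto

lemma walsh_sq [simp]: "walsh n x * walsh n x = 1"
  using walsh_eq_pm1[of n x] by auto

lemma walsh_0 [simp]: "walsh 0 x = 1"
  by (simp add: walsh_def)

lemma walsh_cong: "(\<And>k. bit n k \<Longrightarrow> x k = y k) \<Longrightarrow> walsh n x = walsh n y"
  by (simp add: walsh_def)

lemma walsh_xor: "walsh (a XOR b) x = walsh a x * walsh b x"
proof -
  let ?f = "\<lambda>k. bool_sign (x k)"
  define A where "A = {k. bit a k}"
  define B where "B = {k. bit b k}"
  have fin: "finite A" "finite B" using finite_bit_set_nat by (auto simp: A_def B_def)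
  have "{k. bit (a XOR b) k} = (A - B) \<union> (B - A)"
    by (auto simp: A_def B_def bit_xor_iff)
  then have "walsh (a XOR b) x = prod ?f (A - B) * prod ?f (B - A)"
    unfolding walsh_eq_prod_bool_sign using fin by (simp add: prod.union_disjoint Diff_Int_distrib2)
  moreover have "prod ?f A = prod ?f (A - B) * prod ?f (A \<inter> B)"
    and "prod ?f B = prod ?f (B - A) * prod ?f (A \<inter> B)"
    using prod.subset_diff[of "A \<inter> B" A ?f] prod.subset_diff[of "A \<inter> B" B ?f] fin
    by (simp_all add: Diff_Int Int_commute)
  moreover have "prod ?f (A \<inter> B) * prod ?f (A \<inter> B) = 1"
    by (simp flip: prod.distrib)
  ultimately show ?thesis
    unfolding walsh_eq_prod_bool_sign A_def[symmetric] B_def[symmetric]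
    by (metis (no_types, lifting) mult.assoc mult.commute mult.right_neutral)
qed

lemma walsh_pow2_mult_add:
  "(r::nat) < 2 ^ M \<Longrightarrow> walsh (2 ^ M * p + r) x = walsh (2 ^ M * p) x * walsh r x"
  by (simp add: disjunctive_add_eq_xor pow2_mult_and_eq_0 walsh_xor)

lemma walsh_xor_point: "walsh n (\<lambda>t. x t \<noteq> y t) = walsh n x * walsh n y"
proof -
  have "bool_sign (x k \<noteq> y k) = bool_sign (x k) * bool_sign (y k)" for k
    by (auto simp: bool_sign_def)
  then show ?thesis by (simp add: walsh_eq_prod_bool_sign prod.distrib)
qed

lemma walsh_flip: "walsh n (x(q := \<not> x q)) = (if bit n q then -1 else 1) * walsh n x"
proof -
  have "walsh n (x(q := \<not> x q)) = walsh n (\<lambda>t. x t \<noteq> (t = q))"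
    by (rule walsh_cong) auto
  also have "\<dots> = walsh n x * walsh n (\<lambda>t. t = q)" by (rule walsh_xor_point)
  also have "walsh n (\<lambda>t. t = q) = (if bit n q then -1 else 1)"
    unfolding walsh_def using finite_bit_set_nat[of n]
    by (simp add: prod.If_cases Collect_conj_eq[symmetric] conj_commute)
  finally show ?thesis by (simp add: fun_upd_def)
qed

lemma walsh_pow2: "walsh (2 ^ q) x = bool_sign (x q)"
  by (simp add: walsh_eq_prod_bool_sign bit_exp_iff)

lemma walsh_pow2_mult: "walsh (2 ^ M * p) x = walsh p (\<lambda>t. x (M + t))"
proof -
  have "{k. bit (2 ^ M * p) k} = (\<lambda>t. M + t) ` {k. bit p k}"
    by (auto simp: bit_pow2_mult image_iff) (metis le_add_diff_inverse)
  then show ?thesis unfolding walsh_eq_prod_bool_sign by (simp add: prod.reindex)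
qed

text \<open>\<open>bitval x a b\<close> is the number with binary digits \<open>x a, \<dots>, x (a + b - 1)\<close>, most significant
  first, matching the digit order of \<open>dint\<close>.\<close>

fun bitval :: "(nat \<Rightarrow> bool) \<Rightarrow> nat \<Rightarrow> nat \<Rightarrow> nat" where
  "bitval x a 0 = 0"
| "bitval x a (Suc b) = 2 * bitval x a b + of_bool (x (a + b))"

lemma bit_bitval: "bit (bitval x a b) i \<longleftrightarrow> i < b \<and> x (a + b - 1 - i)"
proof (induction b arbitrary: i)
  case (Suc b)
  then show ?case by (cases i) (simp_all add: bit_0 bit_Suc)
qed simp

lemma bitval_less: "bitval x a b < 2 ^ b"
  by (induction b) auto

lemma bitval_cong: "(\<And>t. t < b \<Longrightarrow> x (a + t) = y (a + t)) \<Longrightarrow> bitval x a b = bitval y a b"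
  by (induction b) auto

lemma bitval_append: "bitval x a (b + c) = 2 ^ c * bitval x a b + bitval x (a + b) c"
  by (induction c) (auto simp: algebra_simps)

definition dint_pt :: "nat \<Rightarrow> nat \<Rightarrow> (nat \<Rightarrow> bool)" where
  "dint_pt M \<mu> = (\<lambda>t. t < M \<and> bit \<mu> (M - 1 - t))"

lemma cube_pt_eq_dint_pt: "cube_pt k m = (\<lambda>l. dint_pt k (m l))"
  by (simp add: cube_pt_def dint_pt_def)

lemma bitval_eq_iff:
  assumes "\<mu> < 2 ^ M"
  shows "bitval x 0 M = \<mu> \<longleftrightarrow> (\<forall>t<M. x t = dint_pt M \<mu> t)"
proof
  assume "bitval x 0 M = \<mu>"
  then show "\<forall>t<M. x t = dint_pt M \<mu> t"
    using bit_bitval[of x 0 M] by (auto simp: dint_pt_def)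
next
  assume h: "\<forall>t<M. x t = dint_pt M \<mu> t"
  show "bitval x 0 M = \<mu>"
  proof (rule bit_eqI)
    fix i
    show "bit (bitval x 0 M) i = bit \<mu> i"
    proof (cases "i < M")
      case True
      then show ?thesis using h[rule_format, of "M - 1 - i"] by (simp add: bit_bitval dint_pt_def)
    next
      case False
      then show ?thesis using bit_imp_less_of_less_pow2[OF assms, of i] by (auto simp: bit_bitval)
    qed
  qed
qed

lemma mem_dint_iff_bitval: "\<mu> < 2 ^ M \<Longrightarrow> x \<in> dint M \<mu> \<longleftrightarrow> bitval x 0 M = \<mu>"
  by (simp add: dint_def bitval_eq_iff dint_pt_def)

lemma bitval_dint_pt: "\<mu> < 2 ^ M \<Longrightarrow> bitval (dint_pt M \<mu>) 0 M = \<mu>"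
  by (simp add: bitval_eq_iff)

lemma dint_pt_mem_dint: "dint_pt M \<mu> \<in> dint M \<mu>"
  by (simp add: dint_def dint_pt_def)

lemma bitval_eqD: "bitval x 0 M = \<mu> \<Longrightarrow> t < M \<Longrightarrow> x t = dint_pt M \<mu> t"
  using bitval_eq_iff[of \<mu> M x] bitval_less[of x 0 M] by simp

text \<open>\<open>zero_from K\<close> consists of the representatives \<open>dint_pt K \<mu>\<close> of the intervals of rank \<open>K\<close>.\<close>

definition zero_from :: "nat \<Rightarrow> (nat \<Rightarrow> bool) set" where
  "zero_from K = {x. \<forall>t\<ge>K. \<not> x t}"

lemma dint_pt_zero_from: "dint_pt K \<mu> \<in> zero_from K"
  by (simp add: dint_pt_def zero_from_def)

lemma dint_pt_bitval: "x \<in> zero_from K \<Longrightarrow> dint_pt K (bitval x 0 K) = x"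
  by (rule ext, rename_tac t, case_tac "t < K") (auto simp: dint_pt_def zero_from_def bit_bitval)

lemma bij_betw_dint_pt: "bij_betw (dint_pt K) {..<2 ^ K} (zero_from K)"
  by (rule bij_betw_byWitness[where f' = "\<lambda>x. bitval x 0 K"])
     (auto simp: bitval_dint_pt dint_pt_bitval dint_pt_zero_from bitval_less)

lemma finite_zero_from [simp]: "finite (zero_from K)"
  using bij_betw_finite[OF bij_betw_dint_pt[of K]] by simp

lemma sum_eq_0_by_involution:
  fixes f :: "'a \<Rightarrow> real"
  assumes "\<And>j. j \<in> A \<Longrightarrow> \<sigma> j \<in> A" "\<And>j. j \<in> A \<Longrightarrow> \<sigma> (\<sigma> j) = j"
    and "\<And>j. j \<in> A \<Longrightarrow> f (\<sigma> j) = - f j"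
  shows "sum f A = 0"
proof -
  have "sum f A = sum (\<lambda>j. - f j) A"
    by (rule sum.reindex_bij_witness[of _ \<sigma> \<sigma>]) (use assms in auto)
  then show ?thesis by (simp add: sum_negf)
qed

definition dirichlet :: "nat \<Rightarrow> (nat \<Rightarrow> bool) \<Rightarrow> real" where
  "dirichlet r x = (\<Sum>j<r. walsh j x)"

lemma dirichlet_abs_le: "\<bar>dirichlet r x\<bar> \<le> r"
  unfolding dirichlet_def using sum_abs[of "\<lambda>j. walsh j x" "{..<r}"] by simp

lemma dirichlet_pow2: "dirichlet (2 ^ M) x = (if \<forall>t<M. \<not> x t then 2 ^ M else 0)"
proof (induction M)
  case (Suc M)
  have "dirichlet (2 ^ Suc M) x = dirichlet (2 ^ M) x + (\<Sum>j<2 ^ M. walsh (2 ^ M + j) x)"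
    unfolding dirichlet_def by (simp add: mult_2 sum_lessThan_add)
  also have "(\<Sum>j<2 ^ M. walsh (2 ^ M + j) x) = bool_sign (x M) * dirichlet (2 ^ M) x"
    unfolding dirichlet_def sum_distrib_left
    using walsh_pow2_mult_add[of _ M 1 x] by (intro sum.cong) (simp_all add: walsh_pow2)
  finally have "dirichlet (2 ^ Suc M) x = (1 + bool_sign (x M)) * dirichlet (2 ^ M) x"
    by (simp add: algebra_simps)
  then show ?case using Suc.IH by (auto simp: bool_sign_def less_Suc_eq)
qed (simp add: dirichlet_def)

text \<open>If digit \<open>q\<close> of \<open>x\<close> is set, the Walsh functions cancel in pairs \<open>j, j XOR 2 ^ q\<close> over every
  full block of length \<open>2 ^ Suc q\<close>.\<close>

lemma dirichlet_abs_le_of_digit: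
  assumes "x q"
  shows "\<bar>dirichlet r x\<bar> \<le> 2 ^ Suc q"
proof -
  define Q :: nat where "Q = 2 ^ Suc q"
  define c where "c = r div Q"
  define e where "e = r mod Q"
  have r: "r = Q * c + e" by (simp add: c_def e_def)
  have "(\<Sum>j<Q * c. walsh j x) = 0"
  proof (rule sum_eq_0_by_involution[where \<sigma> = "\<lambda>j. j XOR 2 ^ q"])
    fix j assume "j \<in> {..<Q * c}"
    then have "(j XOR 2 ^ q) div Q < c"
      using xor_pow2_div[of j q] by (simp add: Q_def div_less_iff_less_mult mult.commute)
    then show "j XOR 2 ^ q \<in> {..<Q * c}"
      by (simp add: Q_def div_less_iff_less_mult mult.commute)
    show "(j XOR 2 ^ q) XOR 2 ^ q = j" by (simp add: xor.assoc)
    show "walsh (j XOR 2 ^ q) x = - walsh j x"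
      by (simp add: walsh_xor walsh_pow2 assms bool_sign_def)
  qed
  then have "dirichlet r x = (\<Sum>i<e. walsh (Q * c + i) x)"
    unfolding dirichlet_def r sum_lessThan_add by simp
  then have "\<bar>dirichlet r x\<bar> \<le> e"
    using sum_abs[of "\<lambda>i. walsh (Q * c + i) x" "{..<e}"] by simp
  also have "real e \<le> 2 ^ Suc q"
    using mod_less_divisor[of Q r] unfolding e_def Q_def
    by (metis less_imp_le of_nat_le_iff of_nat_numeral of_nat_power pos2 zero_less_power)
  finally show ?thesis .
qed

definition depends_upto1 :: "nat \<Rightarrow> ((nat \<Rightarrow> bool) \<Rightarrow> real) \<Rightarrow> bool" where
  "depends_upto1 K f \<longleftrightarrow> (\<forall>x y. (\<forall>t<K. x t = y t) \<longrightarrow> f x = f y)"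

lemma depends_upto1_mono: "depends_upto1 K f \<Longrightarrow> K \<le> K' \<Longrightarrow> depends_upto1 K' f"
  unfolding depends_upto1_def by auto

lemma depends_upto1_walsh: "n < 2 ^ K \<Longrightarrow> depends_upto1 K (walsh n)"
  unfolding depends_upto1_def by (auto intro!: walsh_cong dest: bit_imp_less_of_less_pow2)

lemma zero_from_Suc: "zero_from (Suc n) = zero_from n \<union> (\<lambda>x. x(n := True)) ` zero_from n"
proof (intro equalityI subsetI)
  fix x assume x: "x \<in> zero_from (Suc n)"
  show "x \<in> zero_from n \<union> (\<lambda>x. x(n := True)) ` zero_from n"
  proof (cases "x n")
    case True
    then have "x = (x(n := False))(n := True)" and "x(n := False) \<in> zero_from n"
      using x by (auto simp: zero_from_def fun_eq_iff le_Suc_eq)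
    then show ?thesis by blast
  next
    case False
    then have "x \<in> zero_from n"
      using x by (auto simp: zero_from_def) (metis Suc_leI le_neq_implies_less)
    then show ?thesis by blast
  qed
qed (auto simp: zero_from_def)

lemma sum_zero_from_Suc:
  assumes "depends_upto1 n f"
  shows "sum f (zero_from (Suc n)) = 2 * sum f (zero_from n)"
proof -
  have disj: "zero_from n \<inter> (\<lambda>x. x(n := True)) ` zero_from n = {}"
    by (auto simp: zero_from_def)
  have inj: "inj_on (\<lambda>x. x(n := True)) (zero_from n)"
    by (rule inj_onI) (auto simp: zero_from_def fun_eq_iff split: if_splits)
  have "sum f (zero_from (Suc n)) = sum f (zero_from n) + sum (\<lambda>x. f (x(n := True))) (zero_from n)"
    unfolding zero_from_Suc using disj inj by (simp add: sum.union_disjoint sum.reindex)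
  also have "sum (\<lambda>x. f (x(n := True))) (zero_from n) = sum f (zero_from n)"
    by (rule sum.cong) (use assms in \<open>auto simp: depends_upto1_def\<close>)
  finally show ?thesis by simp
qed

definition avg1 :: "nat \<Rightarrow> ((nat \<Rightarrow> bool) \<Rightarrow> real) \<Rightarrow> real" where
  "avg1 K f = sum f (zero_from K) / 2 ^ K"

lemma avg1_mono:
  assumes "depends_upto1 K f" "K \<le> K'"
  shows "avg1 K' f = avg1 K f"
  using assms(2)
proof (induction K' rule: dec_induct)
  case (step n)
  then show ?case
    using sum_zero_from_Suc[OF depends_upto1_mono[OF assms(1) step(1)]]
    by (simp add: avg1_def)
qed simp

lemma sum_zero_from_indicator:
  fixes f :: "(nat \<Rightarrow> bool) \<Rightarrow> real"
  assumes "\<mu> < 2 ^ M"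
  shows "sum (\<lambda>x. of_bool (bitval x 0 M = \<mu>) * f x) (zero_from M) = f (dint_pt M \<mu>)"
proof -
  have "bitval x 0 M = \<mu> \<longleftrightarrow> x = dint_pt M \<mu>" if "x \<in> zero_from M" for x
    using dint_pt_bitval[OF that] bitval_dint_pt[OF assms] by auto
  then have "sum (\<lambda>x. of_bool (bitval x 0 M = \<mu>) * f x) (zero_from M)
      = sum (\<lambda>x. if x = dint_pt M \<mu> then f x else 0) (zero_from M)"
    by (intro sum.cong) auto
  then show ?thesis by (simp add: dint_pt_zero_from)
qed

lemma sum_zero_from_eq_0_by_flip:
  fixes f :: "(nat \<Rightarrow> bool) \<Rightarrow> real"
  assumes "q < K" and "\<And>x. x \<in> zero_from K \<Longrightarrow> f (x(q := \<not> x q)) = - f x"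
  shows "sum f (zero_from K) = 0"
  by (rule sum_eq_0_by_involution[where \<sigma> = "\<lambda>x. x(q := \<not> x q)"])
     (use assms in \<open>auto simp: zero_from_def\<close>)

text \<open>The Walsh coefficients of the indicator of \<open>dint M \<mu>\<close> times \<open>W (2 ^ M * p)\<close>, computed on points
  of rank \<open>K\<close>.\<close>

definition ind_walsh_coeff :: "nat \<Rightarrow> nat \<Rightarrow> nat \<Rightarrow> nat \<Rightarrow> nat \<Rightarrow> real" where
  "ind_walsh_coeff K M \<mu> p j = avg1 K (\<lambda>x. walsh j x * of_bool (bitval x 0 M = \<mu>) * walsh (2 ^ M * p) x)"

lemma ind_walsh_coeff_eq:
  assumes MK: "M \<le> K" and \<mu>: "\<mu> < 2 ^ M" and j: "j < 2 ^ K" and p: "p < 2 ^ (K - M)"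
  shows "ind_walsh_coeff K M \<mu> p j
       = (if j div 2 ^ M = p then walsh (j mod 2 ^ M) (dint_pt M \<mu>) / 2 ^ M else 0)"
proof (cases "j div 2 ^ M = p")
  case False
  define q where "q = j div 2 ^ M"
  have "(2::nat) ^ K = 2 ^ M * 2 ^ (K - M)" using MK by (simp flip: power_add)
  then have "q < 2 ^ (K - M)" using j by (simp add: q_def div_less_iff_less_mult mult.commute)
  moreover obtain b where b: "bit q b \<noteq> bit p b" using False bit_eq_iff unfolding q_def by blast
  ultimately have "b < K - M" using bit_imp_less_of_less_pow2 p by blast
  have "sum (\<lambda>x. walsh j x * of_bool (bitval x 0 M = \<mu>) * walsh (2 ^ M * p) x) (zero_from K) = 0"
  proof (rule sum_zero_from_eq_0_by_flip[where q = "M + b"])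
    show "M + b < K" using \<open>b < K - M\<close> by simp
    fix x :: "nat \<Rightarrow> bool"
    have "bitval (x(M + b := \<not> x (M + b))) 0 M = bitval x 0 M" by (rule bitval_cong) auto
    moreover have "bit j (M + b) = bit q b" by (simp add: q_def bit_div_pow2)
    ultimately show "walsh j (x(M + b := \<not> x (M + b))) * of_bool (bitval (x(M + b := \<not> x (M + b))) 0 M = \<mu>)
        * walsh (2 ^ M * p) (x(M + b := \<not> x (M + b)))
      = - (walsh j x * of_bool (bitval x 0 M = \<mu>) * walsh (2 ^ M * p) x)"
      using b by (simp add: walsh_flip bit_pow2_mult)
  qed
  then show ?thesis using False by (simp add: ind_walsh_coeff_def avg1_def)
next
  case True
  define r where "r = j mod 2 ^ M"
  have r: "r < 2 ^ M" by (simp add: r_def)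
  have "j = 2 ^ M * p + r" using True div_mult_mod_eq[of j "2 ^ M"] by (simp add: r_def mult.commute)
  then have "walsh j x = walsh (2 ^ M * p) x * walsh r x" for x
    by (simp add: walsh_pow2_mult_add[OF r])
  then have f: "(\<lambda>x. walsh j x * of_bool (bitval x 0 M = \<mu>) * walsh (2 ^ M * p) x)
         = (\<lambda>x. of_bool (bitval x 0 M = \<mu>) * walsh r x)"
    by (simp add: fun_eq_iff mult.commute mult.left_commute)
  have "depends_upto1 M (\<lambda>x. of_bool (bitval x 0 M = \<mu>) * walsh r x)"
    using depends_upto1_walsh[OF r] unfolding depends_upto1_def
    by (metis (no_types, lifting) add_0 bitval_cong)
  then have "ind_walsh_coeff K M \<mu> p j = avg1 M (\<lambda>x. of_bool (bitval x 0 M = \<mu>) * walsh r x)"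
    unfolding ind_walsh_coeff_def f by (rule avg1_mono[OF _ MK])
  also have "\<dots> = walsh r (dint_pt M \<mu>) / 2 ^ M"
    using sum_zero_from_indicator[OF \<mu>, of "walsh r"] by (simp add: avg1_def)
  finally have "ind_walsh_coeff K M \<mu> p j = walsh (j mod 2 ^ M) (dint_pt M \<mu>) / 2 ^ M"
    by (simp only: r_def)
  with True show ?thesis by (simp only: if_True simp_thms)
qed

lemma sum_ind_walsh_coeff:
  assumes MK: "M \<le> K" and \<mu>: "\<mu> < 2 ^ M" and R: "R \<le> 2 ^ K" and p: "p < 2 ^ (K - M)"
  shows "(\<Sum>j<R. ind_walsh_coeff K M \<mu> p j * walsh j y)
       = walsh (2 ^ M * p) y * dirichlet (min (R - 2 ^ M * p) (2 ^ M)) (\<lambda>t. y t \<noteq> dint_pt M \<mu> t) / 2 ^ M"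
proof -
  define \<rho> where "\<rho> = min (R - 2 ^ M * p) (2 ^ M)"
  have blk: "{j\<in>{..<R}. j div 2 ^ M = p} = (\<lambda>r. 2 ^ M * p + r) ` {..<\<rho>}"
  proof (intro equalityI subsetI)
    fix j assume "j \<in> {j\<in>{..<R}. j div 2 ^ M = p}"
    then have j: "j < R" "j div 2 ^ M = p" by auto
    have "j = 2 ^ M * p + j mod 2 ^ M" using j(2) by (metis div_mult_mod_eq mult.commute)
    moreover have "j mod 2 ^ M < \<rho>" unfolding \<rho>_def using j calculation by auto
    ultimately show "j \<in> (\<lambda>r. 2 ^ M * p + r) ` {..<\<rho>}" by blast
  next
    fix j assume "j \<in> (\<lambda>r. 2 ^ M * p + r) ` {..<\<rho>}"
    then obtain r where r: "r < \<rho>" "j = 2 ^ M * p + r" by auto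
    then have "r < 2 ^ M" "2 ^ M * p + r < R" unfolding \<rho>_def by auto
    then show "j \<in> {j\<in>{..<R}. j div 2 ^ M = p}" using r by auto
  qed
  have "(\<Sum>j<R. ind_walsh_coeff K M \<mu> p j * walsh j y)
      = (\<Sum>j<R. if j div 2 ^ M = p then walsh (j mod 2 ^ M) (dint_pt M \<mu>) / 2 ^ M * walsh j y else 0)"
    by (rule sum.cong) (use R in \<open>auto simp: ind_walsh_coeff_eq[OF MK \<mu> _ p]\<close>)
  also have "\<dots> = (\<Sum>j\<in>{j\<in>{..<R}. j div 2 ^ M = p}. walsh (j mod 2 ^ M) (dint_pt M \<mu>) / 2 ^ M * walsh j y)"
    by (rule sum.inter_filter[symmetric]) simp
  also have "\<dots> = (\<Sum>r<\<rho>. walsh ((2 ^ M * p + r) mod 2 ^ M) (dint_pt M \<mu>) / 2 ^ M * walsh (2 ^ M * p + r) y)"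
    unfolding blk by (subst sum.reindex) (auto simp: inj_on_def)
  also have "\<dots> = (\<Sum>r<\<rho>. walsh (2 ^ M * p) y * walsh r (\<lambda>t. y t \<noteq> dint_pt M \<mu> t) / 2 ^ M)"
  proof (rule sum.cong[OF refl])
    fix r assume "r \<in> {..<\<rho>}"
    then have r: "r < 2 ^ M" by (simp add: \<rho>_def)
    then show "walsh ((2 ^ M * p + r) mod 2 ^ M) (dint_pt M \<mu>) / 2 ^ M * walsh (2 ^ M * p + r) y
        = walsh (2 ^ M * p) y * walsh r (\<lambda>t. y t \<noteq> dint_pt M \<mu> t) / 2 ^ M"
      unfolding walsh_xor_point walsh_pow2_mult_add[OF r] by simp
  qed
  finally show ?thesis by (simp add: \<rho>_def dirichlet_def sum_distrib_left sum_divide_distrib)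
qed

definition zero_fromv :: "nat \<Rightarrow> 'd pt set" where
  "zero_fromv K = {h. \<forall>l. h l \<in> zero_from K}"

lemma zero_fromv_PiE: "zero_fromv K = PiE UNIV (\<lambda>_. zero_from K)"
  by (simp add: zero_fromv_def PiE_UNIV_domain Pi_def)

lemma idx_below_PiE: "idx_below K = PiE UNIV (\<lambda>_. {..<(2::nat) ^ K})"
  by (simp add: idx_below_def PiE_UNIV_domain Pi_def)

lemma finite_zero_fromv [simp]: "finite (zero_fromv K :: 'd::finite pt set)"
  unfolding zero_fromv_PiE by (rule finite_PiE) auto

lemma finite_idx_below [simp]: "finite (idx_below K :: 'd::finite idx set)"
  unfolding idx_below_PiE by (rule finite_PiE) auto

lemma idx_below_mono: "n \<in> idx_below K \<Longrightarrow> K \<le> K' \<Longrightarrow> n \<in> idx_below K'"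
proof -
  have "(2::nat) ^ K \<le> 2 ^ K'" if "K \<le> K'" using that by simp
  then show "n \<in> idx_below K \<Longrightarrow> K \<le> K' \<Longrightarrow> n \<in> idx_below K'"
    unfolding idx_below_def using less_le_trans by blast
qed

lemma sum_zero_fromv_prod:
  "(\<Sum>h\<in>zero_fromv K. \<Prod>l\<in>UNIV. f l (h l)) = (\<Prod>l\<in>(UNIV::'d::finite set). \<Sum>x\<in>zero_from K. f l x :: real)"
  unfolding zero_fromv_PiE by (rule prod_sum_PiE[symmetric]) auto

lemma sum_box_prod:
  fixes N :: "'d::finite \<Rightarrow> nat"
  shows "(\<Sum>n\<in>{n. \<forall>l. n l < N l}. \<Prod>l\<in>UNIV. f l (n l)) = (\<Prod>l\<in>(UNIV::'d::finite set). \<Sum>j<N l. f l j :: real)"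
proof -
  have e: "{n. \<forall>l. n l < N l} = PiE UNIV (\<lambda>l. {..<N l})" by (simp add: PiE_UNIV_domain Pi_def)
  show ?thesis unfolding e by (rule prod_sum_PiE[symmetric]) auto
qed

lemma sum_idx_below_prod:
  "(\<Sum>m\<in>idx_below K. \<Prod>l\<in>UNIV. f l (m l)) = (\<Prod>l\<in>(UNIV::'d::finite set). \<Sum>\<mu><2 ^ K. f l \<mu> :: real)"
  unfolding idx_below_PiE by (simp add: prod_sum_PiE)

lemma bij_betw_cube_pt: "bij_betw (cube_pt K) (idx_below K :: 'd idx set) (zero_fromv K)"
  by (rule bij_betw_byWitness[where f' = "\<lambda>h l. bitval (h l) 0 K"])
     (auto simp: cube_pt_eq_dint_pt idx_below_def zero_fromv_def bitval_dint_pt dint_pt_bitval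
        dint_pt_zero_from bitval_less)

lemma sum_idx_below_cube_pt:
  "(\<Sum>m\<in>idx_below K. f (cube_pt K m)) = (\<Sum>h\<in>(zero_fromv K :: 'd pt set). f h)"
  using sum.reindex_bij_betw[OF bij_betw_cube_pt, of f K] by simp

definition agree :: "nat \<Rightarrow> 'd pt \<Rightarrow> 'd pt \<Rightarrow> bool" where
  "agree K h h' \<longleftrightarrow> (\<forall>l t. t < K \<longrightarrow> h l t = h' l t)"

lemma agree_mono: "agree K h h' \<Longrightarrow> K' \<le> K \<Longrightarrow> agree K' h h'"
  unfolding agree_def by auto

lemma agree_sym: "agree K h h' \<Longrightarrow> agree K h' h"
  unfolding agree_def by auto

lemma agree_trans: "agree K h h' \<Longrightarrow> agree K h' h'' \<Longrightarrow> agree K h h''"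
  unfolding agree_def by auto

lemma bitval_agree: "a + b \<le> K \<Longrightarrow> agree K h h' \<Longrightarrow> bitval (h l) a b = bitval (h' l) a b"
  unfolding agree_def by (intro bitval_cong) auto

definition depends_upto :: "nat \<Rightarrow> ('d pt \<Rightarrow> real) \<Rightarrow> bool" where
  "depends_upto K F \<longleftrightarrow> (\<forall>h h'. agree K h h' \<longrightarrow> F h = F h')"

lemma depends_uptoD: "depends_upto K F \<Longrightarrow> agree K h h' \<Longrightarrow> F h = F h'"
  unfolding depends_upto_def by blast

lemma depends_upto_mono: "depends_upto K F \<Longrightarrow> K \<le> K' \<Longrightarrow> depends_upto K' F"
  unfolding depends_upto_def using agree_mono by blast

lemma depends_upto_mult: "depends_upto K F \<Longrightarrow> depends_upto K G \<Longrightarrow> depends_upto K (\<lambda>h. F h * G h)"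
  unfolding depends_upto_def by metis

definition set_digit :: "nat \<Rightarrow> 'd pt \<Rightarrow> ('d \<Rightarrow> bool) \<Rightarrow> 'd pt" where
  "set_digit n h c = (\<lambda>l. (h l)(n := c l))"

lemma zero_fromv_Suc: "zero_fromv (Suc n) = (\<lambda>(h, c). set_digit n h c) ` (zero_fromv n \<times> UNIV)"
proof (intro equalityI subsetI)
  fix h :: "'d pt" assume h: "h \<in> zero_fromv (Suc n)"
  define h0 where "h0 = (\<lambda>l. (h l)(n := False))"
  have "h0 \<in> zero_fromv n"
    using h by (auto simp: zero_fromv_def zero_from_def h0_def)
  moreover have "h = set_digit n h0 (\<lambda>l. h l n)" by (auto simp: set_digit_def h0_def fun_eq_iff)
  ultimately show "h \<in> (\<lambda>(h, c). set_digit n h c) ` (zero_fromv n \<times> UNIV)"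
    by (intro image_eqI[of _ _ "(h0, \<lambda>l. h l n)"]) auto
qed (auto simp: zero_fromv_def zero_from_def set_digit_def)

lemma inj_on_set_digit: "inj_on (\<lambda>(h, c). set_digit n h c) (zero_fromv n \<times> UNIV)"
proof (rule inj_onI, clarify)
  fix h c h' c' assume h: "h \<in> zero_fromv n" "h' \<in> zero_fromv n"
    and e: "set_digit n h c = set_digit n h' c'"
  have "h l t = h' l t" for l t
    using h fun_cong[OF fun_cong[OF e, of l], of t]
    by (cases "t = n") (auto simp: zero_fromv_def zero_from_def set_digit_def)
  moreover have "c l = c' l" for l
    using fun_cong[OF fun_cong[OF e, of l], of n] by (simp add: set_digit_def)
  ultimately show "h = h' \<and> c = c'" by (simp add: fun_eq_iff)
qed

lemma card_UNIV_fun_bool: "card (UNIV :: ('d::finite \<Rightarrow> bool) set) = 2 ^ card (UNIV :: 'd set)"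
  using card_funcsetE[of "UNIV :: 'd set" "UNIV :: bool set"] by (simp add: card_UNIV_bool)

lemma sum_zero_fromv_Suc:
  assumes "depends_upto n F"
  shows "sum F (zero_fromv (Suc n) :: 'd::finite pt set) = 2 ^ card (UNIV :: 'd set) * sum F (zero_fromv n)"
proof -
  have "sum F (zero_fromv (Suc n))
      = (\<Sum>h\<in>zero_fromv n. \<Sum>c\<in>(UNIV :: ('d \<Rightarrow> bool) set). F (set_digit n h c))"
    unfolding zero_fromv_Suc
    by (subst sum.reindex[OF inj_on_set_digit]) (simp add: case_prod_beta sum.cartesian_product)
  also have "\<dots> = (\<Sum>h\<in>zero_fromv n. \<Sum>c\<in>(UNIV :: ('d \<Rightarrow> bool) set). F h)"
    using assms by (intro sum.cong refl) (auto simp: depends_upto_def agree_def set_digit_def)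
  finally show ?thesis by (simp add: card_UNIV_fun_bool sum_distrib_left)
qed

definition avg :: "nat \<Rightarrow> ('d::finite pt \<Rightarrow> real) \<Rightarrow> real" where
  "avg K F = sum F (zero_fromv K) / 2 ^ (K * card (UNIV :: 'd set))"

lemma avg_Suc: "depends_upto n F \<Longrightarrow> avg (Suc n) F = avg n F"
  by (simp add: avg_def sum_zero_fromv_Suc power_add mult.commute)

lemma avg_mono:
  assumes "depends_upto K F" "K \<le> K'"
  shows "avg K' F = avg K F"
  using assms(2)
proof (induction K' rule: dec_induct)
  case (step n)
  then show ?case using avg_Suc[OF depends_upto_mono[OF assms(1) step(1)]] by simp
qed simp

lemma avg_prod: "avg K (\<lambda>h. \<Prod>l\<in>UNIV. f l (h l)) = (\<Prod>l\<in>(UNIV::'d::finite set). avg1 K (f l))"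
  unfolding avg_def avg1_def sum_zero_fromv_prod
  by (simp add: prod_dividef power_mult mult.commute)

lemma avg_add: "avg K (\<lambda>h. f h + g h) = avg K f + avg K g"
  by (simp add: avg_def sum.distrib add_divide_distrib)

lemma avg_sum: "finite S \<Longrightarrow> avg K (\<lambda>h. \<Sum>m\<in>S. f m h) = (\<Sum>m\<in>S. avg K (f m))"
  by (simp add: avg_def sum.swap[of _ S] sum_divide_distrib)

lemma avg_cmult: "avg K (\<lambda>h. c * f h) = c * avg K f"
  by (simp add: avg_def sum_distrib_left)

definition flip_digit :: "'d \<Rightarrow> nat \<Rightarrow> 'd pt \<Rightarrow> 'd pt" where
  "flip_digit l q h = h(l := (h l)(q := \<not> h l q))"

lemma agree_flip_digit: "K \<le> q \<Longrightarrow> agree K (flip_digit l q h) h"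
  unfolding agree_def flip_digit_def by auto

lemma sum_zero_fromv_eq_0_by_flip:
  fixes F :: "'d::finite pt \<Rightarrow> real"
  assumes "q < K" and "\<And>h. h \<in> zero_fromv K \<Longrightarrow> F (flip_digit l q h) = - F h"
  shows "sum F (zero_fromv K) = 0"
proof (rule sum_eq_0_by_involution[where \<sigma> = "flip_digit l q"])
  fix h :: "'d pt" assume "h \<in> zero_fromv K"
  then show "flip_digit l q h \<in> zero_fromv K"
    using assms(1) by (auto simp: zero_fromv_def zero_from_def flip_digit_def)
  show "flip_digit l q (flip_digit l q h) = h" by (auto simp: flip_digit_def)
qed (rule assms(2))

lemma walshv_eq_pm1: "walshv n h = 1 \<or> walshv n h = -1"
  unfolding walshv_def by (rule prod_eq_pm1) (simp_all add: walsh_eq_pm1)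

lemma walshv_flip: "walshv n (flip_digit l q h) = (if bit (n l) q then -1 else 1) * walshv n h"
proof -
  have "walshv n (flip_digit l q h)
      = walsh (n l) ((h l)(q := \<not> h l q)) * (\<Prod>l'\<in>UNIV - {l}. walsh (n l') (h l'))"
    unfolding walshv_def flip_digit_def by (subst prod.remove[of _ l]) auto
  moreover have "walshv n h = walsh (n l) (h l) * (\<Prod>l'\<in>UNIV - {l}. walsh (n l') (h l'))"
    unfolding walshv_def by (subst prod.remove[of _ l]) auto
  ultimately show ?thesis by (simp add: walsh_flip)
qed

lemma depends_upto_walshv: "n \<in> idx_below K \<Longrightarrow> depends_upto K (walshv n)"
  unfolding depends_upto_def agree_def walshv_def idx_below_def
  by (auto intro!: prod.cong walsh_cong dest: bit_imp_less_of_less_pow2)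

lemma walshv_agree: "n \<in> idx_below K \<Longrightarrow> agree K h h' \<Longrightarrow> walshv n h = walshv n h'"
  using depends_upto_walshv[of n K] by (simp add: depends_upto_def)

lemma agree_cube_pt: "m \<in> idx_below K \<Longrightarrow> h \<in> dcube K m \<Longrightarrow> agree K h (cube_pt K m)"
  unfolding agree_def dcube_def dint_def cube_pt_def by auto

lemma mem_dcube_iff_bitval: "m \<in> idx_below K \<Longrightarrow> h \<in> dcube K m \<longleftrightarrow> (\<forall>l. bitval (h l) 0 K = m l)"
  unfolding dcube_def idx_below_def by (simp add: mem_dint_iff_bitval)

lemma cube_pt_mem_dcube: "cube_pt K m \<in> dcube K m"
  by (simp add: dcube_def cube_pt_eq_dint_pt dint_pt_mem_dint)

lemma agree_cube_pt_imp_mem_dcube: "m \<in> idx_below K \<Longrightarrow> agree K h (cube_pt K m) \<Longrightarrow> h \<in> dcube K m"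
  unfolding agree_def dcube_def dint_def cube_pt_def by auto

lemma bitval_cube_pt: "m \<in> idx_below K \<Longrightarrow> bitval (cube_pt K m l) 0 K = m l"
  by (simp add: cube_pt_eq_dint_pt bitval_dint_pt idx_below_def)

lemma agree_cube_pt_bitval: "agree K h (cube_pt K (\<lambda>l. bitval (h l) 0 K))"
  unfolding agree_def cube_pt_eq_dint_pt using bitval_eqD by blast

lemma bitval_mem_idx_below: "(\<lambda>l. bitval (h l) a K) \<in> idx_below K"
  by (simp add: idx_below_def bitval_less)

lemma walsh_const_shift:
  assumes "n \<in> idx_below M"
  shows "walsh_const M n (\<lambda>l. bitval (h l) M M) = walshv (\<lambda>l. 2 ^ M * n l) h"
  unfolding walsh_const_def walshv_def cube_pt_eq_dint_pt walsh_pow2_mult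
proof (rule prod.cong[OF refl], rule walsh_cong)
  fix l k assume "bit (n l) k"
  then have k: "k < M" using assms bit_imp_less_of_less_pow2 by (auto simp: idx_below_def)
  then have "M + M - 1 - (M - 1 - k) = M + k" by simp
  then show "dint_pt M (bitval (h l) M M) k = h l (M + k)" using k by (simp add: dint_pt_def bit_bitval)
qed

lemma m_seq_Suc: "1 \<le> s \<Longrightarrow> m_seq (Suc s) = 4 * m_seq s + 2"
  by (cases s) (auto simp del: m_seq.simps(3), simp)

lemma m_seq_strict_mono: "1 \<le> s \<Longrightarrow> s < t \<Longrightarrow> m_seq s < m_seq t"
proof (induction t rule: less_induct)
  case (less t)
  then obtain t' where t: "t = Suc t'" by (cases t) auto
  have "m_seq s \<le> m_seq t'"
    using less(1)[of t'] less(2,3) t by (cases "s = t'") (auto intro: less_imp_le)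
  also have "\<dots> < m_seq t" using t m_seq_Suc[of t'] less by simp
  finally show ?case .
qed

lemma m_seq_mono: "1 \<le> s \<Longrightarrow> s \<le> t \<Longrightarrow> m_seq s \<le> m_seq t"
  using m_seq_strict_mono[of s t] by (cases "s = t") auto

lemma m_seq_ge: "2 \<le> s \<Longrightarrow> s \<le> m_seq s"
proof (induction s rule: dec_induct)
  case (step n)
  then show ?case using m_seq_Suc[of n] by simp
qed (simp add: numeral_2_eq_2)

text \<open>\<open>stages_below k\<close> is the number of stages \<open>t \<ge> 1\<close> whose condition \<open>F_s \<pi> t\<close> only involves digits
  below \<open>k\<close>.\<close>

fun stages_below :: "nat \<Rightarrow> nat" where
  "stages_below 0 = 0"
| "stages_below (Suc k) = stages_below k + (if \<exists>t\<ge>1. 2 * m_seq t = k then 1 else 0)"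

lemma le_stages_below_iff: "1 \<le> t \<Longrightarrow> t \<le> stages_below k \<longleftrightarrow> 2 * m_seq t < k"
proof (induction k arbitrary: t)
  case (Suc k)
  show ?case
  proof (cases "\<exists>t\<ge>1. 2 * m_seq t = k")
    case False
    then show ?thesis using Suc by auto
  next
    case True
    then obtain t0 where t0: "1 \<le> t0" "2 * m_seq t0 = k" by blast
    have "stages_below k = t0 - 1"
    proof -
      have "t0 - 1 \<le> stages_below k"
        using Suc.IH[of "t0 - 1"] t0 m_seq_strict_mono[of "t0 - 1" t0] by (cases "t0 = 1") auto
      moreover have "\<not> t0 \<le> stages_below k" using Suc.IH[OF t0(1)] t0 by simp
      ultimately show ?thesis by simp
    qed
    then have "t \<le> stages_below (Suc k) \<longleftrightarrow> t \<le> t0" using True t0 by auto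
    also have "\<dots> \<longleftrightarrow> m_seq t \<le> m_seq t0"
      using m_seq_mono[OF Suc.prems] m_seq_strict_mono[OF t0(1), of t] by (auto simp: not_le[symmetric])
    also have "\<dots> \<longleftrightarrow> 2 * m_seq t < Suc k" using t0(2) by auto
    finally show ?thesis .
  qed
qed simp

definition digit_vecs :: "'d idx set" where
  "digit_vecs = {\<sigma>. \<forall>l. \<sigma> l < 2}"

definition digit_vec_sign :: "'d::finite idx \<Rightarrow> real" where
  "digit_vec_sign \<sigma> = (\<Prod>l\<in>UNIV. bool_sign (\<sigma> l = 1))"

lemma digit_vecs_PiE: "digit_vecs = PiE UNIV (\<lambda>_. {..<2::nat})"
  by (simp add: digit_vecs_def PiE_UNIV_domain Pi_def)

lemma finite_digit_vecs [simp]: "finite (digit_vecs :: 'd::finite idx set)"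
  by (simp add: digit_vecs_PiE finite_PiE)

lemma card_digit_vecs: "card (digit_vecs :: 'd::finite idx set) = 2 ^ card (UNIV :: 'd set)"
  by (simp add: digit_vecs_PiE card_PiE)

lemma digit_vec_sign_eq_pm1: "digit_vec_sign \<sigma> = 1 \<or> digit_vec_sign \<sigma> = -1"
  unfolding digit_vec_sign_def by (rule prod_eq_pm1) (auto simp: bool_sign_def)

text \<open>Flipping one coordinate is a sign-reversing involution, so each sign is taken equally often.\<close>

lemma card_digit_vec_sign:
  assumes "v = 1 \<or> v = -1"
  shows "card {\<sigma>\<in>(digit_vecs :: 'd::finite idx set). digit_vec_sign \<sigma> = v} = 2 ^ (card (UNIV :: 'd set) - 1)"
proof -
  define S :: "'d idx set" where "S = digit_vecs"
  define l0 :: 'd where "l0 = undefined"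
  define \<tau> where "\<tau> = (\<lambda>\<sigma>::'d idx. \<sigma>(l0 := 1 - \<sigma> l0))"
  have \<tau>: "\<tau> \<sigma> \<in> S" "\<tau> (\<tau> \<sigma>) = \<sigma>" "digit_vec_sign (\<tau> \<sigma>) = - digit_vec_sign \<sigma>" if "\<sigma> \<in> S" for \<sigma>
  proof -
    have "\<sigma> l0 = 0 \<or> \<sigma> l0 = 1" using that by (auto simp: S_def digit_vecs_def less_2_cases_iff)
    moreover have "digit_vec_sign \<rho> = bool_sign (\<rho> l0 = 1) * (\<Prod>l\<in>UNIV - {l0}. bool_sign (\<rho> l = 1))"
      for \<rho> :: "'d idx"
      unfolding digit_vec_sign_def by (subst prod.remove[of _ l0]) auto
    ultimately show "\<tau> \<sigma> \<in> S" "\<tau> (\<tau> \<sigma>) = \<sigma>" "digit_vec_sign (\<tau> \<sigma>) = - digit_vec_sign \<sigma>"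
      using that by (auto simp: S_def digit_vecs_def \<tau>_def fun_eq_iff bool_sign_def)
  qed
  have eq: "card {\<sigma>\<in>S. digit_vec_sign \<sigma> = 1} = card {\<sigma>\<in>S. digit_vec_sign \<sigma> = -1}"
    by (rule bij_betw_same_card[of \<tau>], rule bij_betw_byWitness[where f' = \<tau>]) (auto simp: \<tau>)
  have S_split: "S = {\<sigma>\<in>S. digit_vec_sign \<sigma> = 1} \<union> {\<sigma>\<in>S. digit_vec_sign \<sigma> = -1}"
    using digit_vec_sign_eq_pm1 by auto
  then have "card S = card {\<sigma>\<in>S. digit_vec_sign \<sigma> = 1} + card {\<sigma>\<in>S. digit_vec_sign \<sigma> = -1}"
    by (subst (1) S_split, intro card_Un_disjoint) (auto simp: S_def)
  then have "2 * card {\<sigma>\<in>S. digit_vec_sign \<sigma> = v} = 2 ^ card (UNIV :: 'd set)"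
    using eq assms card_digit_vecs[where 'd='d] by (auto simp: S_def)
  moreover have "(2::nat) ^ card (UNIV :: 'd set) = 2 * 2 ^ (card (UNIV :: 'd set) - 1)"
    using card_gt_0_iff[of "UNIV :: 'd set"] by (simp flip: power_Suc)
  ultimately show ?thesis by (simp add: S_def)
qed

definition child :: "'d idx \<Rightarrow> 'd idx \<Rightarrow> 'd idx" where
  "child p \<sigma> = (\<lambda>l. 2 * p l + \<sigma> l)"

lemma children_eq_image_child: "children p = child p ` digit_vecs"
  by (auto simp: children_def child_def digit_vecs_def)

lemma inj_on_child: "inj_on (child p) digit_vecs"
  by (auto simp: inj_on_def child_def fun_eq_iff)

lemma parent_child: "\<sigma> \<in> digit_vecs \<Longrightarrow> parent (child p \<sigma>) = p"
  by (auto simp: parent_def child_def digit_vecs_def fun_eq_iff)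

lemma child_mem_idx_below:
  assumes "p \<in> idx_below k" "\<sigma> \<in> digit_vecs"
  shows "child p \<sigma> \<in> idx_below (Suc k)"
proof -
  have "2 * p l + \<sigma> l < 2 * 2 ^ k" for l
  proof -
    have "p l < 2 ^ k" "\<sigma> l < 2" using assms by (auto simp: idx_below_def digit_vecs_def)
    then show ?thesis by linarith
  qed
  then show ?thesis by (simp add: idx_below_def child_def)
qed

lemma parent_mem_idx_below: "m \<in> idx_below (Suc k) \<Longrightarrow> parent m \<in> idx_below k"
  by (auto simp: idx_below_def parent_def div_less_iff_less_mult mult.commute)

lemma agree_cube_pt_parent: "agree k (cube_pt (Suc k) c) (cube_pt k (parent c))"
  unfolding agree_def cube_pt_eq_dint_pt dint_pt_def parent_def
proof (clarify)
  fix l t assume t: "t < k"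
  have "Suc (k - 1 - t) = k - t" using t by simp
  then have "bit (c l div 2) (k - 1 - t) = bit (c l) (k - t)" by (metis bit_Suc)
  then show "(t < Suc k \<and> bit (c l) (Suc k - 1 - t)) = (t < k \<and> bit (c l div 2) (k - 1 - t))"
    using t by simp
qed

section \<open>The set \<open>F\<^sup>\<pi>\<close>\<close>

lemma rad_eq_pm1: "rad k h = 1 \<or> rad k h = -1"
  unfolding rad_def by (rule walshv_eq_pm1)

lemma rad_agree: "agree (Suc k) h h' \<Longrightarrow> rad k h = rad k h'"
  unfolding rad_def by (rule walshv_agree) (auto simp: idx_below_def)

lemma rad_flip_digit: "rad k (flip_digit l k h) = - rad k h"
  by (simp add: rad_def walshv_flip bit_exp_iff)

lemma rad_cube_pt_child:
  assumes "\<sigma> \<in> digit_vecs"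
  shows "rad k (cube_pt (Suc k) (child p \<sigma>)) = digit_vec_sign \<sigma>"
  unfolding rad_def walshv_def cube_pt_eq_dint_pt child_def digit_vec_sign_def
proof (rule prod.cong[OF refl])
  fix l
  have "\<sigma> l < 2" using assms by (simp add: digit_vecs_def)
  then show "walsh (2 ^ k) (dint_pt (Suc k) (2 * p l + \<sigma> l)) = bool_sign (\<sigma> l = 1)"
    by (auto simp: walsh_pow2 dint_pt_def bit_0 less_2_cases_iff)
qed

lemma mem_dcube_double_iff:
  assumes "a \<in> idx_below M" "b \<in> idx_below M"
  shows "h \<in> dcube (2 * M) (\<lambda>l. 2 ^ M * a l + b l)
     \<longleftrightarrow> a = (\<lambda>l. bitval (h l) 0 M) \<and> b = (\<lambda>l. bitval (h l) M M)"
proof -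
  have lt: "2 ^ M * a l + b l < 2 ^ (2 * M)" for l
  proof -
    have "2 ^ M * a l + b l < 2 ^ M * (a l + 1)" using assms by (simp add: idx_below_def)
    also have "\<dots> \<le> 2 ^ M * 2 ^ M" using assms by (intro mult_le_mono2) (simp add: idx_below_def Suc_le_eq)
    finally show ?thesis by (simp add: power_add[symmetric] mult_2)
  qed
  have "h \<in> dcube (2 * M) (\<lambda>l. 2 ^ M * a l + b l)
      \<longleftrightarrow> (\<forall>l. 2 ^ M * bitval (h l) 0 M + bitval (h l) M M = 2 ^ M * a l + b l)"
    using mem_dcube_iff_bitval[of _ "2 * M" h] lt bitval_append[of _ 0 M M]
    by (simp add: idx_below_def mult_2)
  also have "\<dots> \<longleftrightarrow> a = (\<lambda>l. bitval (h l) 0 M) \<and> b = (\<lambda>l. bitval (h l) M M)"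
  proof -
    have "2 ^ M * bitval (h l) 0 M + bitval (h l) M M = 2 ^ M * a l + b l
        \<longleftrightarrow> a l = bitval (h l) 0 M \<and> b l = bitval (h l) M M" for l
    proof
      assume e: "2 ^ M * bitval (h l) 0 M + bitval (h l) M M = 2 ^ M * a l + b l"
      have "(2 ^ M * bitval (h l) 0 M + bitval (h l) M M) div 2 ^ M = (2 ^ M * a l + b l) div 2 ^ M"
        "(2 ^ M * bitval (h l) 0 M + bitval (h l) M M) mod 2 ^ M = (2 ^ M * a l + b l) mod 2 ^ M"
        using e by auto
      then show "a l = bitval (h l) 0 M \<and> b l = bitval (h l) M M"
        using assms bitval_less[of "h l" M M] by (simp add: idx_below_def)
    qed auto
    then show ?thesis by (auto simp: fun_eq_iff)
  qed
  finally show ?thesis .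
qed

locale perm_seq =
  fixes \<pi> :: "nat \<Rightarrow> 'd::finite \<Rightarrow> nat \<Rightarrow> nat"
  assumes bij_pi: "\<forall>s\<ge>1. \<forall>l. bij_betw (\<pi> s l) {..<2 ^ m_seq s} {..<2 ^ m_seq s}"
begin

lemma pi_less: "1 \<le> t \<Longrightarrow> \<mu> < 2 ^ m_seq t \<Longrightarrow> \<pi> t l \<mu> < 2 ^ m_seq t"
  using bij_pi by (meson bij_betwE lessThan_iff)

lemma inj_on_pi: "1 \<le> t \<Longrightarrow> inj_on (\<pi> t l) {..<2 ^ m_seq t}"
  using bij_pi bij_betw_imp_inj_on by blast

text \<open>On the cube of rank \<open>2 m_t\<close> indexed by \<open>(m, m')\<close>, \<open>perm_walsh t\<close> is the constant
  \<open>walsh_const m_t (\<pi>_t m) m'\<close>, so \<open>F_s \<pi> t\<close> is the set where it equals \<open>rad (2 m_t)\<close>.\<close>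

definition perm_walsh :: "nat \<Rightarrow> 'd pt \<Rightarrow> real" where
  "perm_walsh t h = walshv (\<lambda>l. 2 ^ m_seq t * \<pi> t l (bitval (h l) 0 (m_seq t))) h"

lemma perm_walsh_eq_pm1: "perm_walsh t h = 1 \<or> perm_walsh t h = -1"
  unfolding perm_walsh_def by (rule walshv_eq_pm1)

lemma pi_bitval_mem_idx_below:
  "1 \<le> t \<Longrightarrow> (\<lambda>l. \<pi> t l (bitval (h l) 0 (m_seq t))) \<in> idx_below (m_seq t)"
  using pi_less bitval_less by (simp add: idx_below_def)

lemma mem_F_s_iff:
  assumes "1 \<le> t"
  shows "h \<in> F_s \<pi> t \<longleftrightarrow> rad (2 * m_seq t) h = perm_walsh t h"
proof -
  define M where "M = m_seq t"
  define \<beta> where "\<beta> = (\<lambda>l. bitval (h l) 0 M)"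
  define \<beta>' where "\<beta>' = (\<lambda>l. bitval (h l) M M)"
  have idx: "\<beta> \<in> idx_below M" "\<beta>' \<in> idx_below M"
    unfolding \<beta>_def \<beta>'_def by (rule bitval_mem_idx_below)+
  have ph: "perm_walsh t h = walsh_const M (\<lambda>l. \<pi> t l (\<beta> l)) \<beta>'"
    unfolding perm_walsh_def \<beta>'_def \<beta>_def M_def
    by (rule walsh_const_shift[symmetric, OF pi_bitval_mem_idx_below[OF assms]])
  show ?thesis
  proof
    assume "h \<in> F_s \<pi> t"
    then obtain a b where ab: "a \<in> idx_below M" "b \<in> idx_below M"
      and h: "h \<in> dcube (2 * M) (\<lambda>l. 2 ^ M * a l + b l)"
      and r: "rad (2 * M) h = walsh_const M (\<lambda>l. \<pi> t l (a l)) b"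
      unfolding F_s_def M_def by blast
    then have "a = \<beta>" "b = \<beta>'"
      using mem_dcube_double_iff[OF ab, of h] unfolding \<beta>_def \<beta>'_def by simp_all
    then show "rad (2 * m_seq t) h = perm_walsh t h" using r ph by (simp add: M_def)
  next
    assume "rad (2 * m_seq t) h = perm_walsh t h"
    then have "rad (2 * M) h = walsh_const M (\<lambda>l. \<pi> t l (\<beta> l)) \<beta>'" using ph by (simp add: M_def)
    moreover have "h \<in> dcube (2 * M) (\<lambda>l. 2 ^ M * \<beta> l + \<beta>' l)"
      using mem_dcube_double_iff[OF idx] by (simp add: \<beta>_def \<beta>'_def)
    ultimately show "h \<in> F_s \<pi> t" unfolding F_s_def M_def[symmetric] using idx by blast
  qed
qed

lemma perm_walsh_agree:
  assumes "1 \<le> t" and "agree (2 * m_seq t) h h'"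
  shows "perm_walsh t h = perm_walsh t h'"
proof -
  have b: "bitval (h l) 0 (m_seq t) = bitval (h' l) 0 (m_seq t)" for l
    using assms(2) by (rule bitval_agree[rotated]) simp
  have "2 ^ m_seq t * \<pi> t l (bitval (h' l) 0 (m_seq t)) < 2 ^ (2 * m_seq t)" for l
    using pi_less[OF assms(1) bitval_less, of l "h' l" 0] by (simp add: mult_2 power_add)
  then show ?thesis
    unfolding perm_walsh_def b by (intro walshv_agree[OF _ assms(2)]) (simp add: idx_below_def)
qed

lemma F_s_agree:
  assumes "1 \<le> t" and "agree (Suc (2 * m_seq t)) h h'"
  shows "h \<in> F_s \<pi> t \<longleftrightarrow> h' \<in> F_s \<pi> t"
proof -
  have "rad (2 * m_seq t) h = rad (2 * m_seq t) h'" by (rule rad_agree[OF assms(2)])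
  moreover have "perm_walsh t h = perm_walsh t h'"
    by (rule perm_walsh_agree[OF assms(1) agree_mono[OF assms(2)]]) simp
  ultimately show ?thesis using mem_F_s_iff[OF assms(1)] by simp
qed

lemma one_plus_rad_perm_walsh:
  "1 \<le> t \<Longrightarrow> 1 + rad (2 * m_seq t) h * perm_walsh t h = (if h \<in> F_s \<pi> t then 2 else 0)"
  using mem_F_s_iff[of t h] rad_eq_pm1[of "2 * m_seq t" h] perm_walsh_eq_pm1[of t h] by auto

text \<open>\<open>riesz T\<close> is the Riesz product of the factors \<open>1 + rad (2 m_t) * perm_walsh t\<close>, \<open>1 \<le> t \<le> T\<close>
  (lemma \<open>riesz_Suc\<close>).\<close>

definition riesz :: "nat \<Rightarrow> 'd pt \<Rightarrow> real" where
  "riesz T h = (if \<forall>t\<in>{1..T}. h \<in> F_s \<pi> t then 2 ^ T else 0)"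

lemma riesz_Suc:
  "riesz (Suc T) h = riesz T h * (1 + rad (2 * m_seq (Suc T)) h * perm_walsh (Suc T) h)"
  by (simp add: one_plus_rad_perm_walsh riesz_def atLeastAtMostSuc_conv)

lemma riesz_agree:
  assumes "\<forall>t\<in>{1..T}. Suc (2 * m_seq t) \<le> K" and "agree K h h'"
  shows "riesz T h = riesz T h'"
proof -
  have "\<forall>t\<in>{1..T}. h \<in> F_s \<pi> t \<longleftrightarrow> h' \<in> F_s \<pi> t"
    using assms by (auto intro!: F_s_agree agree_mono[OF assms(2)])
  then show ?thesis unfolding riesz_def by simp
qed

definition admissible :: "nat \<Rightarrow> 'd pt \<Rightarrow> bool" where
  "admissible k h \<longleftrightarrow> (\<forall>t\<in>{1..stages_below k}. h \<in> F_s \<pi> t)"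

lemma riesz_stages_below: "riesz (stages_below k) h = (if admissible k h then 2 ^ stages_below k else 0)"
  by (simp add: riesz_def admissible_def)

lemma admissible_agree:
  assumes "agree k h h'"
  shows "admissible k h \<longleftrightarrow> admissible k h'"
proof -
  have "h \<in> F_s \<pi> t \<longleftrightarrow> h' \<in> F_s \<pi> t" if "t \<in> {1..stages_below k}" for t
  proof -
    have "2 * m_seq t < k" using that le_stages_below_iff[of t k] by simp
    then have "agree (Suc (2 * m_seq t)) h h'" by (intro agree_mono[OF assms]) simp
    then show ?thesis using F_s_agree that by simp
  qed
  then show ?thesis by (simp add: admissible_def)
qed

end

context perm_seq
begin

text \<open>Flipping digit \<open>2 m_t\<close> of one coordinate reverses the sign of \<open>rad (2 m_t)\<close> but not of
  \<open>perm_walsh t\<close>, so it moves a point into \<open>F_s \<pi> t\<close> without touching lower digits.\<close>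

fun repair :: "'d pt \<Rightarrow> nat \<Rightarrow> 'd pt" where
  "repair h 0 = h"
| "repair h (Suc T) = (if repair h T \<in> F_s \<pi> (Suc T) then repair h T
     else flip_digit undefined (2 * m_seq (Suc T)) (repair h T))"

lemma repair_mem_F_s: "repair h (Suc T) \<in> F_s \<pi> (Suc T)"
proof (cases "repair h T \<in> F_s \<pi> (Suc T)")
  case False
  define g where "g = repair h T"
  define g' where "g' = flip_digit undefined (2 * m_seq (Suc T)) g"
  have "agree (2 * m_seq (Suc T)) g' g" unfolding g'_def by (rule agree_flip_digit) simp
  then have "perm_walsh (Suc T) g' = perm_walsh (Suc T) g" by (intro perm_walsh_agree) simp_all
  moreover have "rad (2 * m_seq (Suc T)) g' = - rad (2 * m_seq (Suc T)) g"
    by (simp add: g'_def rad_flip_digit)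
  moreover have "rad (2 * m_seq (Suc T)) g \<noteq> perm_walsh (Suc T) g"
    using False mem_F_s_iff[of "Suc T" g] by (simp add: g_def)
  ultimately have "rad (2 * m_seq (Suc T)) g' = perm_walsh (Suc T) g'"
    using rad_eq_pm1[of "2 * m_seq (Suc T)" g] perm_walsh_eq_pm1[of "Suc T" g] by auto
  then show ?thesis using False mem_F_s_iff[of "Suc T" g'] by (simp add: g_def g'_def)
qed simp

lemma repair_Suc_digit: "p \<noteq> 2 * m_seq (Suc T) \<Longrightarrow> repair h (Suc T) l p = repair h T l p"
  by (auto simp: flip_digit_def)

lemma agree_repair_Suc:
  assumes "k \<le> 2 * m_seq (Suc T)"
  shows "agree k (repair h (Suc T)) (repair h T)"
  unfolding agree_def
proof (intro allI impI)
  fix l p assume "p < k"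
  with assms have "p \<noteq> 2 * m_seq (Suc T)" by simp
  then show "repair h (Suc T) l p = repair h T l p" by (rule repair_Suc_digit)
qed

lemma agree_repair_stage:
  assumes "1 \<le> t" and "t \<le> T"
  shows "agree (Suc (2 * m_seq t)) (repair h T) (repair h t)"
  using assms(2)
proof (induction T rule: dec_induct)
  case (step T)
  then have "Suc (2 * m_seq t) \<le> 2 * m_seq (Suc T)" using m_seq_strict_mono[OF assms(1), of "Suc T"] by simp
  then show ?case using step(3) agree_repair_Suc agree_trans by blast
qed (simp add: agree_def)

lemma agree_repair:
  assumes "admissible k h"
  shows "agree k (repair h T) h"
proof (induction T)
  case (Suc T)
  show ?case
  proof (cases "repair h T \<in> F_s \<pi> (Suc T)")
    case False
    have "k \<le> 2 * m_seq (Suc T)"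
    proof (rule ccontr)
      assume "\<not> k \<le> 2 * m_seq (Suc T)"
      then have "Suc T \<le> stages_below k" and "agree (Suc (2 * m_seq (Suc T))) (repair h T) h"
        using le_stages_below_iff[of "Suc T" k] agree_mono[OF Suc] by auto
      then show False using False assms F_s_agree[of "Suc T"] by (auto simp: admissible_def)
    qed
    then show ?thesis using Suc agree_repair_Suc agree_trans by blast
  qed (use Suc in simp)
qed (simp add: agree_def)

lemma repair_digit_stable: "p + 2 \<le> T \<Longrightarrow> repair h T l p = repair h (p + 2) l p"
proof (induction T rule: dec_induct)
  case (step T)
  have "Suc T \<le> m_seq (Suc T)" using m_seq_ge[of "Suc T"] step by simp
  then show ?case using repair_Suc_digit[of p T] step by simp
qed simp

definition repair_lim :: "'d pt \<Rightarrow> 'd pt" where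
  "repair_lim h = (\<lambda>l p. repair h (p + 2) l p)"

lemma agree_repair_lim: "K + 2 \<le> T \<Longrightarrow> agree K (repair_lim h) (repair h T)"
  unfolding agree_def repair_lim_def using repair_digit_stable by (metis add_le_mono1 le_trans less_imp_le_nat)

lemma repair_lim_mem_F_pi: "repair_lim h \<in> F_pi \<pi>"
  unfolding F_pi_def
proof
  fix t :: nat assume t: "t \<in> {1..}"
  define T where "T = t + 2 * m_seq t + 3"
  have "agree (Suc (2 * m_seq t)) (repair_lim h) (repair h t)"
    using agree_repair_lim[of "Suc (2 * m_seq t)" T] agree_repair_stage[of t T] t
    by (auto simp: T_def intro: agree_trans)
  moreover have "repair h t \<in> F_s \<pi> t" using repair_mem_F_s[of h "t - 1"] t by (simp del: repair.simps)
  ultimately show "repair_lim h \<in> F_s \<pi> t" using F_s_agree t by simp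
qed

lemma dcube_meets_F_pi_iff:
  assumes "m \<in> idx_below k"
  shows "dcube k m \<inter> F_pi \<pi> \<noteq> {} \<longleftrightarrow> admissible k (cube_pt k m)"
proof
  assume "dcube k m \<inter> F_pi \<pi> \<noteq> {}"
  then obtain g where g: "g \<in> dcube k m" "g \<in> F_pi \<pi>" by blast
  have "cube_pt k m \<in> F_s \<pi> t" if t: "t \<in> {1..stages_below k}" for t
  proof -
    have "2 * m_seq t < k" using t le_stages_below_iff[of t k] by simp
    then have "agree (Suc (2 * m_seq t)) g (cube_pt k m)"
      by (intro agree_mono[OF agree_cube_pt[OF assms g(1)]]) simp
    moreover have "g \<in> F_s \<pi> t" using g(2) t by (simp add: F_pi_def)
    ultimately show ?thesis using F_s_agree t by simp
  qed
  then show "admissible k (cube_pt k m)" by (simp add: admissible_def)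
next
  assume "admissible k (cube_pt k m)"
  then have "agree k (repair_lim (cube_pt k m)) (cube_pt k m)"
    using agree_repair_lim[of k "k + 2"] agree_repair agree_trans by blast
  then have "repair_lim (cube_pt k m) \<in> dcube k m" by (rule agree_cube_pt_imp_mem_dcube[OF assms])
  then show "dcube k m \<inter> F_pi \<pi> \<noteq> {}" using repair_lim_mem_F_pi by blast
qed

end

context perm_seq
begin

text \<open>At a rank \<open>k = 2 m_t\<close> exactly the children on which \<open>rad k\<close> (the parity of the new digits)
  matches \<open>perm_walsh t\<close> (constant on the parent) stay admissible; at other ranks all of them do.\<close>

lemma card_admissible_children:
  assumes p: "p \<in> idx_below k" and adm: "admissible k (cube_pt k p)"
  shows "real (card {\<sigma>\<in>digit_vecs. admissible (Suc k) (cube_pt (Suc k) (child p \<sigma>))})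
       * 2 ^ stages_below (Suc k) = 2 ^ card (UNIV :: 'd set) * 2 ^ stages_below k"
proof -
  define C where "C = {\<sigma>\<in>digit_vecs. admissible (Suc k) (cube_pt (Suc k) (child p \<sigma>))}"
  have adm_k: "admissible k (cube_pt (Suc k) (child p \<sigma>))" if "\<sigma> \<in> digit_vecs" for \<sigma>
    using admissible_agree[OF agree_cube_pt_parent[of k "child p \<sigma>"]] adm parent_child[OF that]
    by simp
  show ?thesis
  proof (cases "\<exists>t\<ge>1. 2 * m_seq t = k")
    case False
    then have "C = digit_vecs" using adm_k by (auto simp: C_def admissible_def)
    then show ?thesis using False by (simp add: C_def card_digit_vecs)
  next
    case True
    then obtain t where t: "1 \<le> t" "2 * m_seq t = k" by blast
    have stage: "stages_below (Suc k) = Suc (stages_below k)" "t = Suc (stages_below k)"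
      using True le_stages_below_iff[OF t(1), of k] le_stages_below_iff[OF t(1), of "Suc k"] t(2)
      by auto
    define v where "v = perm_walsh t (cube_pt k p)"
    have "C = {\<sigma>\<in>digit_vecs. digit_vec_sign \<sigma> = v}"
    proof -
      have "admissible (Suc k) (cube_pt (Suc k) (child p \<sigma>)) \<longleftrightarrow> digit_vec_sign \<sigma> = v"
        if \<sigma>: "\<sigma> \<in> digit_vecs" for \<sigma>
      proof -
        have "admissible (Suc k) (cube_pt (Suc k) (child p \<sigma>))
            \<longleftrightarrow> cube_pt (Suc k) (child p \<sigma>) \<in> F_s \<pi> t"
          using adm_k[OF \<sigma>] stage by (auto simp: admissible_def atLeastAtMostSuc_conv)
        also have "\<dots> \<longleftrightarrow> digit_vec_sign \<sigma> = v"
          using mem_F_s_iff[OF t(1)] rad_cube_pt_child[OF \<sigma>] perm_walsh_agree[OF t(1)]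
            agree_cube_pt_parent[of k "child p \<sigma>"] parent_child[OF \<sigma>] t(2)
          by (simp add: v_def)
        finally show ?thesis .
      qed
      then show ?thesis by (auto simp: C_def)
    qed
    then have "card C = 2 ^ (card (UNIV :: 'd set) - 1)"
      using card_digit_vec_sign[OF perm_walsh_eq_pm1[of t "cube_pt k p"]] by (simp add: v_def)
    moreover have "(2::real) ^ card (UNIV :: 'd set) = 2 * 2 ^ (card (UNIV :: 'd set) - 1)"
      using card_gt_0_iff[of "UNIV :: 'd set"] by (simp flip: power_Suc)
    ultimately show ?thesis using stage by (simp add: C_def)
  qed
qed

lemma tauE_F_pi_eq:
  assumes "m \<in> idx_below k"
  shows "tauE (F_pi \<pi>) k m
       = riesz (stages_below k) (cube_pt k m) / 2 ^ (k * card (UNIV :: 'd set))"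
  using assms
proof (induction k arbitrary: m)
  case 0
  have "dcube 0 m \<inter> F_pi \<pi> \<noteq> {}" using repair_lim_mem_F_pi by (auto simp: dcube_def dint_def)
  then show ?case by (simp add: riesz_def)
next
  case (Suc k)
  define p where "p = parent m"
  have p: "p \<in> idx_below k" unfolding p_def by (rule parent_mem_idx_below[OF Suc.prems])
  show ?case
  proof (cases "admissible (Suc k) (cube_pt (Suc k) m)")
    case False
    then show ?thesis
      using dcube_meets_F_pi_iff[OF Suc.prems] by (simp del: stages_below.simps add: riesz_stages_below)
  next
    case True
    have adm_p: "admissible k (cube_pt k p)"
      using True admissible_agree[OF agree_cube_pt_parent[of k m]] le_stages_below_iff
      by (auto simp: p_def admissible_def)
    have "{c \<in> children p. dcube (Suc k) c \<inter> F_pi \<pi> \<noteq> {}}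
        = child p ` {\<sigma>\<in>digit_vecs. admissible (Suc k) (cube_pt (Suc k) (child p \<sigma>))}"
      unfolding children_eq_image_child using dcube_meets_F_pi_iff child_mem_idx_below[OF p] by auto
    then have card: "card {c \<in> children p. dcube (Suc k) c \<inter> F_pi \<pi> \<noteq> {}}
        = card {\<sigma>\<in>digit_vecs. admissible (Suc k) (cube_pt (Suc k) (child p \<sigma>))}"
      by (simp add: card_image inj_on_subset[OF inj_on_child])
    define c where "c = real (card {\<sigma>\<in>digit_vecs. admissible (Suc k) (cube_pt (Suc k) (child p \<sigma>))})"
    define d where "d = card (UNIV :: 'd set)"
    have c: "c * 2 ^ stages_below (Suc k) = 2 ^ d * 2 ^ stages_below k"
      using card_admissible_children[OF p adm_p] by (simp add: c_def d_def)
    then have "c \<noteq> 0" by auto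
    have "tauE (F_pi \<pi>) (Suc k) m = 2 ^ stages_below k / 2 ^ (k * d) / c"
      using dcube_meets_F_pi_iff[OF Suc.prems] True Suc.IH[OF p] adm_p card
      by (simp add: riesz_stages_below c_def d_def p_def)
    also have "\<dots> = 2 ^ stages_below (Suc k) / 2 ^ (Suc k * d)"
      using c \<open>c \<noteq> 0\<close> by (simp del: stages_below.simps add: divide_simps power_add)
        (simp add: algebra_simps)
    finally show ?thesis using True by (simp only: riesz_stages_below if_True d_def)
  qed
qed

end

section \<open>The Riesz products on a cube and their Walsh coefficients\<close>

lemma agree_mem_dcube_iff:
  assumes "m \<in> idx_below k" "agree K h h'" "k \<le> K"
  shows "h \<in> dcube k m \<longleftrightarrow> h' \<in> dcube k m"
  using bitval_agree[of 0 k K h h'] assms by (simp add: mem_dcube_iff_bitval)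

locale perm_seq_cube = perm_seq \<pi> for \<pi> :: "nat \<Rightarrow> 'd::finite \<Rightarrow> nat \<Rightarrow> nat" +
  fixes k0 :: nat and m0 :: "'d idx"
  assumes m0: "m0 \<in> idx_below k0"
begin

definition density :: "nat \<Rightarrow> 'd pt \<Rightarrow> real" where
  "density T h = of_bool (h \<in> dcube k0 m0) * riesz T h"

lemma density_Suc:
  "density (Suc T) h = density T h * (1 + rad (2 * m_seq (Suc T)) h * perm_walsh (Suc T) h)"
  by (simp add: density_def riesz_Suc)

lemma density_nonneg: "0 \<le> density T h"
  by (simp add: density_def riesz_def)

lemma density_le: "density T h \<le> 2 ^ T"
  by (simp add: density_def riesz_def)

lemma depends_upto_density_stages:
  assumes "k0 \<le> K" and "\<forall>t\<in>{1..T}. Suc (2 * m_seq t) \<le> K"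
  shows "depends_upto K (density T)"
  unfolding depends_upto_def density_def
proof (intro allI impI)
  fix h h' :: "'d pt" assume "agree K h h'"
  then show "of_bool (h \<in> dcube k0 m0) * riesz T h = of_bool (h' \<in> dcube k0 m0) * riesz T h'"
    using agree_mem_dcube_iff[OF m0 _ assms(1)] riesz_agree[OF assms(2)] by simp
qed

lemma depends_upto_density:
  assumes "k0 \<le> K" and "Suc (2 * m_seq T) \<le> K"
  shows "depends_upto K (density T)"
proof (rule depends_upto_density_stages[OF assms(1)], intro ballI)
  fix t assume "t \<in> {1..T}"
  then have "m_seq t \<le> m_seq T" using m_seq_mono by auto
  then show "Suc (2 * m_seq t) \<le> K" using assms(2) by simp
qed

text \<open>\<open>coeff_rank T n\<close> is a rank on whose cubes both \<open>walshv n\<close> and \<open>density T\<close> are constant.\<close>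

definition coeff_rank :: "nat \<Rightarrow> 'd idx \<Rightarrow> nat" where
  "coeff_rank T n = k0 + Suc (2 * m_seq T) + (\<Sum>l\<in>UNIV. n l)"

definition density_coeff :: "nat \<Rightarrow> 'd idx \<Rightarrow> real" where
  "density_coeff T n = avg (coeff_rank T n) (\<lambda>h. walshv n h * density T h)"

lemma mem_idx_below_coeff_rank: "n \<in> idx_below (coeff_rank T n)"
proof -
  have "n l < 2 ^ coeff_rank T n" for l
  proof -
    have "n l \<le> (\<Sum>l\<in>UNIV. n l)" by (rule member_le_sum) auto
    also have "\<dots> \<le> coeff_rank T n" by (simp add: coeff_rank_def)
    also have "coeff_rank T n < 2 ^ coeff_rank T n" by (rule less_exp)
    finally show ?thesis .
  qed
  then show ?thesis by (simp add: idx_below_def)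
qed

lemma avg_walshv_density:
  assumes "depends_upto K (density T)" and "n \<in> idx_below K"
  shows "avg K (\<lambda>h. walshv n h * density T h) = density_coeff T n"
proof -
  define K' where "K' = min K (coeff_rank T n)"
  have "depends_upto (coeff_rank T n) (density T)"
    by (rule depends_upto_density) (auto simp: coeff_rank_def)
  then have dep: "depends_upto K' (\<lambda>h. walshv n h * density T h)"
    using assms mem_idx_below_coeff_rank[of n T]
    by (intro depends_upto_mult depends_upto_walshv) (auto simp: K'_def min_def)
  have "avg K (\<lambda>h. walshv n h * density T h) = avg K' (\<lambda>h. walshv n h * density T h)"
    by (rule avg_mono[OF dep]) (simp add: K'_def)
  also have "\<dots> = density_coeff T n"
    unfolding density_coeff_def by (rule avg_mono[OF dep, symmetric]) (simp add: K'_def)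
  finally show ?thesis .
qed

lemma density_coeff_eq_0:
  assumes "k0 \<le> Suc (2 * m_seq T)" and "2 ^ Suc (2 * m_seq T) \<le> n l"
  shows "density_coeff T n = 0"
proof -
  obtain q where q: "Suc (2 * m_seq T) \<le> q" "bit (n l) q" using pow2_le_imp_high_bit[OF assms(2)] by blast
  have "q < coeff_rank T n"
    using mem_idx_below_coeff_rank[of n T] q(2) bit_imp_less_of_less_pow2[of "n l" "coeff_rank T n" q]
    by (simp add: idx_below_def)
  then have "sum (\<lambda>h. walshv n h * density T h) (zero_fromv (coeff_rank T n)) = 0"
  proof (rule sum_zero_fromv_eq_0_by_flip)
    fix h :: "'d pt"
    have "density T (flip_digit l q h) = density T h"
      by (rule depends_uptoD[OF depends_upto_density[OF assms(1) order_refl] agree_flip_digit[OF q(1)]])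
    then show "walshv n (flip_digit l q h) * density T (flip_digit l q h) = - (walshv n h * density T h)"
      using q(2) by (simp add: walshv_flip)
  qed
  then show ?thesis by (simp add: density_coeff_def avg_def)
qed

text \<open>Passing from \<open>density T\<close> to \<open>density (Suc T)\<close> adds \<open>density T * rad q * perm_walsh (Suc T)\<close>
  with \<open>q = 2 m_(T+1)\<close>; flipping digit \<open>q\<close> of coordinate \<open>j\<close> shows that this term is orthogonal to
  \<open>walshv n\<close> as soon as \<open>n j < 2 ^ q\<close>.\<close>

lemma density_coeff_Suc:
  assumes nj: "n j < 2 ^ (2 * m_seq (Suc T))" and k0: "k0 \<le> 2 * m_seq (Suc T)"
  shows "density_coeff (Suc T) n = density_coeff T n"
proof -
  define q where "q = 2 * m_seq (Suc T)"
  define K where "K = max (coeff_rank T n) (coeff_rank (Suc T) n)"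
  have dep: "depends_upto K (density T)" "depends_upto K (density (Suc T))"
    by (rule depends_upto_density; simp add: K_def coeff_rank_def)+
  have nK: "n \<in> idx_below K"
    by (rule idx_below_mono[OF mem_idx_below_coeff_rank[of n T]]) (simp add: K_def)
  have dq: "depends_upto q (density T)"
  proof (cases "T = 0")
    case True
    then show ?thesis using k0 depends_upto_density_stages[of q T] by (simp add: q_def)
  next
    case False
    then have "m_seq T < m_seq (Suc T)" using m_seq_strict_mono[of T "Suc T"] by simp
    then show ?thesis using k0 by (intro depends_upto_density) (auto simp: q_def)
  qed
  have "sum (\<lambda>h. walshv n h * (density T h * (rad q h * perm_walsh (Suc T) h))) (zero_fromv K) = 0"
  proof (rule sum_zero_fromv_eq_0_by_flip[of q K _ j])
    show "q < K" by (simp add: K_def coeff_rank_def q_def)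
    fix h :: "'d pt"
    have ag: "agree q (flip_digit j q h) h" by (rule agree_flip_digit) simp
    have "\<not> bit (n j) q" using nj bit_imp_less_of_less_pow2[of "n j" q] by (auto simp: q_def)
    then have "walshv n (flip_digit j q h) = walshv n h" by (simp add: walshv_flip)
    moreover have "density T (flip_digit j q h) = density T h" by (rule depends_uptoD[OF dq ag])
    moreover have "perm_walsh (Suc T) (flip_digit j q h) = perm_walsh (Suc T) h"
      using ag by (intro perm_walsh_agree) (simp_all add: q_def)
    ultimately show "walshv n (flip_digit j q h) * (density T (flip_digit j q h)
        * (rad q (flip_digit j q h) * perm_walsh (Suc T) (flip_digit j q h)))
      = - (walshv n h * (density T h * (rad q h * perm_walsh (Suc T) h)))"
      by (simp add: rad_flip_digit)
  qed
  then have "avg K (\<lambda>h. walshv n h * (density T h * (rad q h * perm_walsh (Suc T) h))) = 0"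
    by (simp add: avg_def)
  moreover have "avg K (\<lambda>h. walshv n h * density (Suc T) h) = avg K (\<lambda>h. walshv n h * density T h)
      + avg K (\<lambda>h. walshv n h * (density T h * (rad q h * perm_walsh (Suc T) h)))"
    unfolding density_Suc q_def[symmetric] avg_add[symmetric] by (simp add: algebra_simps)
  ultimately show ?thesis using avg_walshv_density[OF dep(1) nK] avg_walshv_density[OF dep(2) nK] by simp
qed

lemma density_coeff_stable:
  assumes "\<And>T. T0 \<le> T \<Longrightarrow> (\<exists>j. n j < 2 ^ (2 * m_seq (Suc T))) \<and> k0 \<le> 2 * m_seq (Suc T)"
  shows "T0 \<le> T \<Longrightarrow> density_coeff T n = density_coeff T0 n"
proof (induction T rule: dec_induct)
  case (step T)
  then obtain j where "n j < 2 ^ (2 * m_seq (Suc T))" "k0 \<le> 2 * m_seq (Suc T)" using assms by blast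
  then show ?case using density_coeff_Suc step(3) by simp
qed simp

end

context perm_seq_cube
begin

definition tau_coeff :: "'d idx \<Rightarrow> real" where
  "tau_coeff = qm_coeff (qm_restrict (tauE (F_pi \<pi>)) k0 m0)"

lemma qm_restrict_fine:
  assumes "k0 \<le> k" and m: "m \<in> idx_below k"
  shows "qm_restrict (tauE (F_pi \<pi>)) k0 m0 k m
       = density (stages_below k) (cube_pt k m) / 2 ^ (k * card (UNIV :: 'd set))"
proof -
  have "dcube k0 m0 \<inter> dcube k m \<noteq> {} \<longleftrightarrow> cube_pt k m \<in> dcube k0 m0"
    using agree_mem_dcube_iff[OF m0 agree_cube_pt[OF m] assms(1)] cube_pt_mem_dcube by blast
  then show ?thesis
    unfolding qm_restrict_def density_def using assms tauE_F_pi_eq[OF m] by auto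
qed

lemma qm_restrict_coarse:
  assumes "k \<le> k0" and m: "m \<in> idx_below k"
  shows "qm_restrict (tauE (F_pi \<pi>)) k0 m0 k m
       = (if m = (\<lambda>l. bitval (cube_pt k0 m0 l) 0 k) then tauE (F_pi \<pi>) k0 m0 else 0)"
proof -
  have "dcube k0 m0 \<inter> dcube k m \<noteq> {} \<longleftrightarrow> cube_pt k0 m0 \<in> dcube k m"
    using agree_mem_dcube_iff[OF m agree_cube_pt[OF m0] assms(1)] cube_pt_mem_dcube by blast
  also have "\<dots> \<longleftrightarrow> m = (\<lambda>l. bitval (cube_pt k0 m0 l) 0 k)"
    using mem_dcube_iff_bitval[OF m] by auto
  finally have meet: "dcube k0 m0 \<inter> dcube k m = {} \<longleftrightarrow> m \<noteq> (\<lambda>l. bitval (cube_pt k0 m0 l) 0 k)"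
    by blast
  have "(\<lambda>l. bitval (cube_pt k0 m0 l) 0 k0) = m0" using bitval_cube_pt[OF m0] by auto
  then show ?thesis using assms(1) unfolding qm_restrict_def meet by (cases "k0 \<le> k") auto
qed

lemma sum_qm_restrict_fine:
  assumes "k0 \<le> k" and "n \<in> idx_below k"
  shows "(\<Sum>m\<in>idx_below k. walsh_const k n m * qm_restrict (tauE (F_pi \<pi>)) k0 m0 k m)
       = density_coeff (stages_below k) n"
proof -
  have "(\<Sum>m\<in>idx_below k. walsh_const k n m * qm_restrict (tauE (F_pi \<pi>)) k0 m0 k m)
      = (\<Sum>m\<in>idx_below k. walshv n (cube_pt k m) * density (stages_below k) (cube_pt k m)
          / 2 ^ (k * card (UNIV :: 'd set)))"
    using qm_restrict_fine[OF assms(1)] by (simp add: walsh_const_def)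
  also have "\<dots> = (\<Sum>h\<in>zero_fromv k. walshv n h * density (stages_below k) h
          / 2 ^ (k * card (UNIV :: 'd set)))"
    by (rule sum_idx_below_cube_pt)
  also have "\<dots> = avg k (\<lambda>h. walshv n h * density (stages_below k) h)"
    by (simp add: avg_def sum_divide_distrib)
  also have "\<dots> = density_coeff (stages_below k) n"
  proof (rule avg_walshv_density[OF depends_upto_density_stages assms(2)])
    show "\<forall>t\<in>{1..stages_below k}. Suc (2 * m_seq t) \<le> k"
      using le_stages_below_iff by (auto simp: Suc_le_eq)
  qed (rule assms(1))
  finally show ?thesis .
qed

text \<open>Below rank \<open>k0\<close> only the cube containing \<open>dcube k0 m0\<close> carries mass, and \<open>walshv n\<close> is
  constant on it.\<close>

lemma sum_qm_restrict_coarse: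
  assumes "k \<le> k0" and n: "n \<in> idx_below k"
  shows "(\<Sum>m\<in>idx_below k. walsh_const k n m * qm_restrict (tauE (F_pi \<pi>)) k0 m0 k m)
       = walshv n (cube_pt k0 m0) * tauE (F_pi \<pi>) k0 m0"
proof -
  define mp where "mp = (\<lambda>l. bitval (cube_pt k0 m0 l) 0 k)"
  have "walsh_const k n mp = walshv n (cube_pt k0 m0)"
    unfolding walsh_const_def mp_def
    by (rule walshv_agree[OF n], rule agree_sym, rule agree_cube_pt_bitval)
  have "(\<Sum>m\<in>idx_below k. walsh_const k n m * qm_restrict (tauE (F_pi \<pi>)) k0 m0 k m)
      = (\<Sum>m\<in>idx_below k. if m = mp then walsh_const k n mp * tauE (F_pi \<pi>) k0 m0 else 0)"
    using qm_restrict_coarse[OF assms(1)] by (intro sum.cong) (simp_all add: mp_def)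
  also have "\<dots> = walsh_const k n mp * tauE (F_pi \<pi>) k0 m0"
    by (simp add: mp_def bitval_mem_idx_below)
  finally show ?thesis using \<open>walsh_const k n mp = _\<close> by simp
qed

lemma tau_coeff_eq_density_coeff_stages:
  "\<exists>k. k0 \<le> k \<and> n \<in> idx_below k \<and> tau_coeff n = density_coeff (stages_below k) n"
proof -
  define k where "k = (LEAST k. n \<in> idx_below k)"
  have n: "n \<in> idx_below k"
    unfolding k_def using mem_idx_below_coeff_rank by (rule LeastI)
  have tau: "tau_coeff n
      = (\<Sum>m\<in>idx_below k. walsh_const k n m * qm_restrict (tauE (F_pi \<pi>)) k0 m0 k m)"
    unfolding tau_coeff_def qm_coeff_def Let_def k_def by (rule refl)
  show ?thesis
  proof (cases "k0 \<le> k")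
    case True
    then show ?thesis using n tau sum_qm_restrict_fine[OF True n] by (intro exI[of _ k]) simp
  next
    case False
    then have n0: "n \<in> idx_below k0" using idx_below_mono[OF n] by simp
    have "tau_coeff n = walshv n (cube_pt k0 m0) * tauE (F_pi \<pi>) k0 m0"
      using tau sum_qm_restrict_coarse[OF _ n] False by simp
    also have "\<dots> = density_coeff (stages_below k0) n"
      using sum_qm_restrict_coarse[OF order_refl n0] sum_qm_restrict_fine[OF order_refl n0] by simp
    finally have "tau_coeff n = density_coeff (stages_below k0) n" .
    then show ?thesis using n0 by (intro exI[of _ k0]) simp
  qed
qed

lemma tau_coeff_eq:
  assumes nj: "n j < 2 ^ (2 * m_seq (Suc s))" and k0: "k0 \<le> 2 * m_seq (Suc s)"
  shows "tau_coeff n = density_coeff s n"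
proof -
  obtain k where k: "k0 \<le> k" "n \<in> idx_below k" "tau_coeff n = density_coeff (stages_below k) n"
    using tau_coeff_eq_density_coeff_stages by blast
  define T where "T = max s (stages_below k)"
  have "density_coeff T n = density_coeff (stages_below k) n"
  proof (rule density_coeff_stable)
    fix T' assume "stages_below k \<le> T'"
    then have le: "k \<le> 2 * m_seq (Suc T')" using le_stages_below_iff[of "Suc T'" k] by simp
    have "n j < 2 ^ k" using k(2) by (simp add: idx_below_def)
    also have "(2::nat) ^ k \<le> 2 ^ (2 * m_seq (Suc T'))" using le by simp
    finally show "(\<exists>j. n j < 2 ^ (2 * m_seq (Suc T'))) \<and> k0 \<le> 2 * m_seq (Suc T')"
      using le k(1) by auto
  qed (simp add: T_def)
  moreover have "density_coeff T n = density_coeff s n"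
  proof (rule density_coeff_stable)
    fix T' assume "s \<le> T'"
    then have le: "m_seq (Suc s) \<le> m_seq (Suc T')" by (intro m_seq_mono) auto
    have "n j < 2 ^ (2 * m_seq (Suc s))" by (rule nj)
    also have "(2::nat) ^ (2 * m_seq (Suc s)) \<le> 2 ^ (2 * m_seq (Suc T'))" using le by simp
    finally show "(\<exists>j. n j < 2 ^ (2 * m_seq (Suc T'))) \<and> k0 \<le> 2 * m_seq (Suc T')"
      using le k0 by auto
  qed (simp add: T_def)
  ultimately show ?thesis using k(3) by simp
qed

lemma density_eventually_zero:
  assumes "g \<notin> dcube k0 m0 \<inter> F_pi \<pi>"
  shows "\<exists>r0. \<forall>r\<ge>r0. density r g = 0"
proof (cases "g \<in> dcube k0 m0")
  case True
  then obtain t where "1 \<le> t" "g \<notin> F_s \<pi> t" using assms unfolding F_pi_def by auto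
  then have "density r g = 0" if "t \<le> r" for r using that by (auto simp: density_def riesz_def)
  then show ?thesis by blast
qed (simp add: density_def)

text \<open>For fixed \<open>n j\<close> choose \<open>s\<close> with \<open>n j < 2 ^ (2 m_(s+1))\<close>; then \<open>tau_coeff n = density_coeff s n\<close>,
  which vanishes as soon as some index reaches \<open>2 ^ (2 m_s + 1)\<close>.\<close>

lemma tau_coeff_support: "\<exists>B. \<forall>n. n j = x \<longrightarrow> (\<exists>l. B \<le> n l) \<longrightarrow> tau_coeff n = 0"
proof -
  define s where "s = x + k0 + 2"
  have ms: "s \<le> m_seq s" and ms1: "Suc s \<le> m_seq (Suc s)"
    using m_seq_ge[of s] m_seq_ge[of "Suc s"] by (simp_all add: s_def)
  show ?thesis
  proof (intro exI allI impI)
    fix n :: "'d idx" assume nj: "n j = x" and "\<exists>l. 2 ^ Suc (2 * m_seq s) \<le> n l"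
    then obtain l where l: "2 ^ Suc (2 * m_seq s) \<le> n l" by blast
    have "x < 2 ^ x" by (rule less_exp)
    also have "(2::nat) ^ x \<le> 2 ^ (2 * m_seq (Suc s))"
      using ms1 by (intro power_increasing) (auto simp: s_def)
    finally have "tau_coeff n = density_coeff s n"
      using nj ms1 by (intro tau_coeff_eq[where j = j]) (auto simp: s_def)
    also have "density_coeff s n = 0"
      using ms l by (intro density_coeff_eq_0[of s n l]) (auto simp: s_def)
    finally show "tau_coeff n = 0" .
  qed
qed

lemma tau_coeff_0_ne_0:
  assumes "g \<in> dcube k0 m0" "g \<in> F_pi \<pi>"
  shows "tau_coeff (\<lambda>_. 0) \<noteq> 0"
proof -
  define s where "s = k0 + 2"
  define K where "K = coeff_rank s (\<lambda>_. 0)"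
  have "tau_coeff (\<lambda>_. 0) = density_coeff s (\<lambda>_. 0)"
    using m_seq_ge[of "Suc s"] by (intro tau_coeff_eq[where j = undefined]) (auto simp: s_def)
  moreover have "0 < density_coeff s (\<lambda>_. 0)"
  proof -
    define h where "h = cube_pt K (\<lambda>l. bitval (g l) 0 K)"
    have "h \<in> zero_fromv K"
      unfolding h_def using bij_betw_cube_pt[of K] bitval_mem_idx_below by (metis bij_betwE)
    moreover have "depends_upto K (density s)" by (rule depends_upto_density) (auto simp: K_def coeff_rank_def)
    then have "density s h = density s g"
      unfolding h_def by (rule depends_uptoD[OF _ agree_sym[OF agree_cube_pt_bitval]])
    moreover have "density s g = 2 ^ s" using assms by (auto simp: density_def riesz_def F_pi_def)
    ultimately have "0 < sum (\<lambda>h. walshv (\<lambda>_. 0) h * density s h) (zero_fromv K)"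
      using density_nonneg by (intro sum_pos2[of _ h]) (simp_all add: walshv_def)
    then show ?thesis by (simp add: density_coeff_def K_def avg_def)
  qed
  ultimately show ?thesis by simp
qed

end

section \<open>Partial sums\<close>

text \<open>By \<open>sum_ind_walsh_coeff\<close>, \<open>block_kernel M R y p \<mu>\<close> is the partial sum of order \<open>R\<close> at \<open>y\<close> of
  the Walsh series of the indicator of \<open>dint M \<mu>\<close> times \<open>W (2 ^ M * p)\<close>.\<close>

definition block_kernel :: "nat \<Rightarrow> nat \<Rightarrow> (nat \<Rightarrow> bool) \<Rightarrow> nat \<Rightarrow> nat \<Rightarrow> real" where
  "block_kernel M R y p \<mu> = walsh (2^M * p) y * dirichlet (min (R - 2^M * p) (2^M)) (\<lambda>t. y t \<noteq> dint_pt M \<mu> t) / 2^M"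

lemma block_kernel_abs_le: "\<bar>block_kernel M R y p \<mu>\<bar> \<le> 1"
proof -
  have "\<bar>dirichlet (min (R - 2^M * p) (2^M)) (\<lambda>t. y t \<noteq> dint_pt M \<mu> t)\<bar> \<le> min (R - 2^M * p) (2^M)" by (rule dirichlet_abs_le)
  also have "real (min (R - 2^M * p) (2^M)) \<le> 2^M" by simp
  finally show ?thesis by (simp add: block_kernel_def abs_mult)
qed

lemma block_kernel_abs_le_of_differ: assumes "t < J" "y t \<noteq> dint_pt M \<mu> t" shows "\<bar>block_kernel M R y p \<mu>\<bar> \<le> 2^J / 2^M"
proof -
  have "\<bar>dirichlet (min (R - 2^M * p) (2^M)) (\<lambda>t. y t \<noteq> dint_pt M \<mu> t)\<bar> \<le> 2^Suc t" by (rule dirichlet_abs_le_of_digit) (use assms in simp)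
  also have "(2::real)^Suc t \<le> 2^J" using assms(1) by (intro power_increasing) auto
  finally show ?thesis by (simp add: block_kernel_def abs_mult divide_right_mono)
qed

lemma block_kernel_ne_0_imp:
  assumes mu: "\<mu> < 2^M" and R: "2^(2*M) \<le> R" and nz: "block_kernel M R y (2^M + p) \<mu> \<noteq> 0"
  shows "\<mu> = bitval y 0 M \<or> p = (R - 2^(2*M)) div 2^M"
proof -
  define P where "P = 2^M * (2^M + p)"
  define \<rho> where "\<rho> = min (R - P) (2^M)"
  have Dnz: "dirichlet \<rho> (\<lambda>t. y t \<noteq> dint_pt M \<mu> t) \<noteq> 0" using nz by (simp add: block_kernel_def P_def \<rho>_def)
  have P2: "P = 2^(2*M) + 2^M * p" by (simp add: P_def algebra_simps power_add[symmetric] mult_2)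
  show ?thesis
  proof (cases "\<rho> = 2^M")
    case True
    have "dirichlet (2^M) (\<lambda>t. y t \<noteq> dint_pt M \<mu> t) \<noteq> 0" using Dnz True by simp
    then have "\<forall>t<M. \<not> (y t \<noteq> dint_pt M \<mu> t)" unfolding dirichlet_pow2 by (simp split: if_splits)
    then have "bitval y 0 M = \<mu>" using bitval_eq_iff[OF mu] by simp
    then show ?thesis by simp
  next
    case False
    have "\<rho> \<noteq> 0"
    proof
      assume "\<rho> = 0" then show False using Dnz by (simp add: dirichlet_def)
    qed
    then have "0 < R - P" "R - P < 2^M" using False by (auto simp: \<rho>_def min_def split: if_splits)
    then have "R - 2^(2*M) = 2^M * p + (R - P)" using P2 by simp
    then have "(R - 2^(2*M)) div 2^M = p" using \<open>R - P < 2^M\<close> by simp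
    then show ?thesis by simp
  qed
qed

lemma sum_abs_le_card_mult:
  fixes f :: "nat \<Rightarrow> real" and c :: real
  assumes "finite A" "\<And>x. x \<in> A \<Longrightarrow> f x \<noteq> 0 \<Longrightarrow> x \<in> B" "\<And>x. x \<in> A \<Longrightarrow> \<bar>f x\<bar> \<le> c" "finite B" "0 \<le> c"
  shows "(\<Sum>x\<in>A. \<bar>f x\<bar>) \<le> card B * c"
proof -
  have "(\<Sum>x\<in>A. \<bar>f x\<bar>) = (\<Sum>x\<in>A \<inter> B. \<bar>f x\<bar>)"
    by (rule sum.mono_neutral_right) (use assms in auto)
  also have "\<dots> \<le> (\<Sum>x\<in>A \<inter> B. c)" by (rule sum_mono) (use assms in auto)
  also have "\<dots> = card (A \<inter> B) * c" by simp
  also have "\<dots> \<le> card B * c"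
    by (rule mult_right_mono) (use assms in \<open>simp_all add: card_mono\<close>)
  finally show ?thesis .
qed

lemma card_preimage_le_1: assumes "inj_on \<pi>' {..<(2::nat)^M}" shows "card {\<mu>\<in>{..<(2::nat)^M}. \<pi>' \<mu> = v} \<le> 1"
proof -
  have "\<forall>a\<in>{\<mu>\<in>{..<(2::nat)^M}. \<pi>' \<mu> = v}. \<forall>b\<in>{\<mu>\<in>{..<(2::nat)^M}. \<pi>' \<mu> = v}. a = b"
    using assms by (auto simp: inj_on_def)
  then show ?thesis using card_le_Suc0_iff_eq[of "{\<mu>\<in>{..<(2::nat)^M}. \<pi>' \<mu> = v}"] by simp
qed

lemma sum_block_kernel_le_2:
  assumes R: "2^(2*M) \<le> R" and inj: "inj_on \<pi>' {..<(2::nat)^M}"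
  shows "(\<Sum>\<mu><2^M. \<bar>block_kernel M R y (2^M + \<pi>' \<mu>) \<mu>\<bar>) \<le> 2"
proof -
  define Z where "Z = {\<mu>\<in>{..<(2::nat)^M}. \<pi>' \<mu> = (R - 2^(2*M)) div 2^M}"
  have cZ: "card Z \<le> 1" unfolding Z_def by (rule card_preimage_le_1[OF inj])
  have "(\<Sum>\<mu><2^M. \<bar>block_kernel M R y (2^M + \<pi>' \<mu>) \<mu>\<bar>) \<le> card ({bitval y 0 M} \<union> Z) * (1::real)"
  proof (rule sum_abs_le_card_mult)
    fix x assume "x \<in> {..<(2::nat)^M}" "block_kernel M R y (2^M + \<pi>' x) x \<noteq> 0"
    then show "x \<in> {bitval y 0 M} \<union> Z" using block_kernel_ne_0_imp[OF _ R] by (auto simp: Z_def)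
  qed (auto simp: block_kernel_abs_le Z_def)
  also have "card ({bitval y 0 M} \<union> Z) \<le> card {bitval y 0 M} + card Z" by (rule card_Un_le)
  finally show ?thesis using cZ by simp
qed

lemma sum_block_kernel_differ_le:
  assumes R: "2^(2*M) \<le> R" and inj: "inj_on \<pi>' {..<(2::nat)^M}" and J: "J \<le> M"
  shows "(\<Sum>\<mu><2^M. of_bool (\<exists>t<J. y t \<noteq> dint_pt M \<mu> t) * \<bar>block_kernel M R y (2^M + \<pi>' \<mu>) \<mu>\<bar>) \<le> 2^J / 2^M"
proof -
  define Z where "Z = {\<mu>\<in>{..<(2::nat)^M}. \<pi>' \<mu> = (R - 2^(2*M)) div 2^M}"
  have cZ: "card Z \<le> 1" unfolding Z_def by (rule card_preimage_le_1[OF inj])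
  have "(\<Sum>\<mu><2^M. of_bool (\<exists>t<J. y t \<noteq> dint_pt M \<mu> t) * \<bar>block_kernel M R y (2^M + \<pi>' \<mu>) \<mu>\<bar>)
      = (\<Sum>\<mu><2^M. \<bar>of_bool (\<exists>t<J. y t \<noteq> dint_pt M \<mu> t) * block_kernel M R y (2^M + \<pi>' \<mu>) \<mu>\<bar>)"
    by (simp add: abs_mult)
  also have "\<dots> \<le> card Z * (2^J / 2^M)"
  proof (rule sum_abs_le_card_mult)
    fix x assume x: "x \<in> {..<(2::nat)^M}" and nz: "of_bool (\<exists>t<J. y t \<noteq> dint_pt M x t) * block_kernel M R y (2^M + \<pi>' x) x \<noteq> 0"
    then obtain t where t: "t < J" "y t \<noteq> dint_pt M x t" by auto
    have "x \<noteq> bitval y 0 M"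
    proof
      assume "x = bitval y 0 M"
      then have "y t = dint_pt M x t" using bitval_eqD[of y M x t] t J by simp
      then show False using t by simp
    qed
    then show "x \<in> Z" using block_kernel_ne_0_imp[OF _ R, of x y "\<pi>' x"] x nz by (auto simp: Z_def)
  next
    fix x assume "x \<in> {..<(2::nat)^M}"
    show "\<bar>of_bool (\<exists>t<J. y t \<noteq> dint_pt M x t) * block_kernel M R y (2^M + \<pi>' x) x\<bar> \<le> 2^J / 2^M"
    proof (cases "\<exists>t<J. y t \<noteq> dint_pt M x t")
      case True
      then obtain t where "t < J" "y t \<noteq> dint_pt M x t" by blast
      then show ?thesis using block_kernel_abs_le_of_differ True by simp
    next
      case False
      then have z: "of_bool (\<exists>t<J. y t \<noteq> dint_pt M x t) = (0::real)" by (simp only: of_bool_eq(1))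
      show ?thesis unfolding z by simp
    qed
  qed (auto simp: Z_def)
  also have "\<dots> \<le> 1 * (2^J / 2^M)" using cZ by (intro mult_right_mono) auto
  finally show ?thesis by simp
qed

lemma prod_if_eq: "(\<Prod>l\<in>(UNIV::'d::finite set). if l = l0 then (a::real) else b) = a * b^(card (UNIV::'d set) - 1)"
proof -
  have "(\<Prod>l\<in>(UNIV::'d set). if l = l0 then a else b) = a * (\<Prod>l\<in>UNIV - {l0}. if l = l0 then a else b)"
    by (subst prod.remove[of _ l0]) auto
  also have "(\<Prod>l\<in>(UNIV::'d set) - {l0}. if l = l0 then a else b) = (\<Prod>l\<in>(UNIV::'d set) - {l0}. b)"
    by (rule prod.cong) auto
  also have "\<dots> = b^(card (UNIV::'d set) - 1)" by (simp add: card_Diff_singleton)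
  finally show ?thesis .
qed

text \<open>The kernel estimate behind the decay of the partial sums: each \<open>\<mu>\<close> contributes at most \<open>1\<close>,
  nonzero terms occur only for \<open>\<mu> = bitval y 0 M\<close> and one further \<open>\<mu>\<close> (injectivity of \<open>\<pi>'\<close>), and
  in the coordinate \<open>l0\<close> where \<open>y\<close> differs early from \<open>dint_pt M \<mu>\<close> the Dirichlet kernel is small.\<close>

lemma sum_prod_block_kernel_far:
  fixes y :: "'d::finite pt"
  assumes "\<forall>l. 2 ^ (2 * M) \<le> N l" and "\<And>l. inj_on (\<pi>' l) {..<(2::nat) ^ M}" and "J \<le> M"
  shows "(\<Sum>m\<in>idx_below M. of_bool (\<exists>t<J. y l0 t \<noteq> dint_pt M (m l0) t)
          * (\<Prod>l\<in>UNIV. \<bar>block_kernel M (N l) (y l) (2 ^ M + \<pi>' l (m l)) (m l)\<bar>))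
       \<le> 2 ^ J / 2 ^ M * 2 ^ (card (UNIV :: 'd set) - 1)"
proof -
  define f where "f = (\<lambda>l \<mu>. (if l = l0 then of_bool (\<exists>t<J. y l t \<noteq> dint_pt M \<mu> t) else 1)
      * \<bar>block_kernel M (N l) (y l) (2 ^ M + \<pi>' l \<mu>) \<mu>\<bar>)"
  have "(\<Sum>m\<in>idx_below M. of_bool (\<exists>t<J. y l0 t \<noteq> dint_pt M (m l0) t)
          * (\<Prod>l\<in>UNIV. \<bar>block_kernel M (N l) (y l) (2 ^ M + \<pi>' l (m l)) (m l)\<bar>))
      = (\<Sum>m\<in>idx_below M. \<Prod>l\<in>UNIV. f l (m l))"
    unfolding f_def prod.distrib by (simp add: prod.delta if_distrib[of of_bool] cong: if_cong)
  also have "\<dots> = (\<Prod>l\<in>UNIV. \<Sum>\<mu><2 ^ M. f l \<mu>)" by (rule sum_idx_below_prod)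
  also have "\<dots> \<le> (\<Prod>l\<in>(UNIV::'d set). if l = l0 then 2 ^ J / 2 ^ M else 2)"
  proof (rule prod_mono, intro conjI)
    fix l
    show "0 \<le> (\<Sum>\<mu><2 ^ M. f l \<mu>)" by (rule sum_nonneg) (simp add: f_def)
    show "(\<Sum>\<mu><2 ^ M. f l \<mu>) \<le> (if l = l0 then 2 ^ J / 2 ^ M else 2)"
      using sum_block_kernel_differ_le[OF _ assms(2) assms(3), of "N l" "y l"]
        sum_block_kernel_le_2[OF _ assms(2), of "N l" "y l"] assms(1)
      by (cases "l = l0") (simp_all add: f_def)
  qed
  also have "\<dots> = 2 ^ J / 2 ^ M * 2 ^ (card (UNIV :: 'd set) - 1)" by (rule prod_if_eq)
  finally show ?thesis .
qed

lemma prod_of_bool: "(\<Prod>l\<in>(UNIV::'d::finite set). (of_bool (P l) :: real)) = of_bool (\<forall>l. P l)"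
proof (cases "\<forall>l. P l")
  case False
  then obtain l where "\<not> P l" by blast
  then show ?thesis using False by (simp add: prod_zero)
qed simp

lemma sum_idx_below_indicator:
  fixes f :: "'d::finite idx \<Rightarrow> real"
  shows "(\<Sum>m\<in>idx_below M. (\<Prod>l\<in>UNIV. of_bool (bitval (h l) 0 M = m l)) * f m)
       = f (\<lambda>l. bitval (h l) 0 M)"
proof -
  have "(\<Prod>l\<in>UNIV. of_bool (bitval (h l) 0 M = m l) :: real) = of_bool ((\<lambda>l. bitval (h l) 0 M) = m)"
    for m :: "'d idx"
    unfolding prod_of_bool by (simp add: fun_eq_iff)
  then have "(\<Sum>m\<in>idx_below M. (\<Prod>l\<in>UNIV. of_bool (bitval (h l) 0 M = m l)) * f m)
      = (\<Sum>m\<in>idx_below M. if (\<lambda>l. bitval (h l) 0 M) = m then f m else 0)"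
    by (intro sum.cong) auto
  then show ?thesis by (simp add: bitval_mem_idx_below)
qed

lemma block_kernel_0: "2^M \<le> R \<Longrightarrow> \<mu> < 2^M \<Longrightarrow> block_kernel M R y 0 \<mu> = of_bool (bitval y 0 M = \<mu>)"
proof -
  assume R: "2^M \<le> R" and mu: "\<mu> < 2^M"
  have "min (R - 2^M * 0) (2^M) = 2^M" using R by simp
  then have "block_kernel M R y 0 \<mu> = dirichlet (2^M) (\<lambda>t. y t \<noteq> dint_pt M \<mu> t) / 2^M" by (simp add: block_kernel_def)
  also have "\<dots> = of_bool (\<forall>t<M. y t = dint_pt M \<mu> t)" by (simp add: dirichlet_pow2)
  also have "(\<forall>t<M. y t = dint_pt M \<mu> t) \<longleftrightarrow> bitval y 0 M = \<mu>" using bitval_eq_iff[OF mu] by simp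
  finally show ?thesis .
qed

context perm_seq_cube
begin

definition density_at :: "nat \<Rightarrow> 'd idx \<Rightarrow> real" where
  "density_at r m = density r (cube_pt (m_seq (Suc r)) m)"

definition next_freq :: "nat \<Rightarrow> 'd \<Rightarrow> nat \<Rightarrow> nat" where
  "next_freq r l \<mu> = 2 ^ m_seq (Suc r) + \<pi> (Suc r) l \<mu>"

lemma density_eq_density_at:
  assumes "1 \<le> r" and "k0 \<le> m_seq (Suc r)"
  shows "density r h = density_at r (\<lambda>l. bitval (h l) 0 (m_seq (Suc r)))"
proof -
  have "depends_upto (m_seq (Suc r)) (density r)"
    using assms m_seq_Suc[OF assms(1)] by (intro depends_upto_density) auto
  then show ?thesis unfolding density_at_def by (rule depends_uptoD[OF _ agree_cube_pt_bitval])
qed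

lemma rad_perm_walsh_eq_prod:
  "rad (2 * m_seq (Suc r)) h * perm_walsh (Suc r) h
     = (\<Prod>l\<in>UNIV. walsh (2 ^ m_seq (Suc r) * next_freq r l (bitval (h l) 0 (m_seq (Suc r)))) (h l))"
proof -
  define M where "M = m_seq (Suc r)"
  have "walsh (2 ^ (2 * M)) x * walsh (2 ^ M * \<pi> (Suc r) l \<mu>) x = walsh (2 ^ M * next_freq r l \<mu>) x"
    if "\<mu> < 2 ^ M" for l \<mu> x
  proof -
    have "2 ^ M * \<pi> (Suc r) l \<mu> < 2 ^ (2 * M)"
      using pi_less[of "Suc r" \<mu> l] that by (simp add: M_def mult_2 power_add)
    moreover have "2 ^ M * next_freq r l \<mu> = 2 ^ (2 * M) * 1 + 2 ^ M * \<pi> (Suc r) l \<mu>"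
      by (simp add: next_freq_def M_def algebra_simps flip: power_add mult_2)
    ultimately show ?thesis using walsh_pow2_mult_add[of "2 ^ M * \<pi> (Suc r) l \<mu>" "2 * M" 1 x] by simp
  qed
  then show ?thesis
    unfolding rad_def perm_walsh_def walshv_def M_def[symmetric] prod.distrib[symmetric]
    using bitval_less by (intro prod.cong) auto
qed

text \<open>On each cube of rank \<open>m_(r+1)\<close>, \<open>density r\<close> is constant and the factor of stage \<open>r + 1\<close> is
  \<open>1 + W (2 ^ m_(r+1) * next_freq r l (m l))\<close> in each coordinate.\<close>

lemma density_Suc_expand:
  assumes "1 \<le> r" and "k0 \<le> m_seq (Suc r)"
  shows "density (Suc r) h = (\<Sum>m\<in>idx_below (m_seq (Suc r)). density_at r m *
      ((\<Prod>l\<in>UNIV. of_bool (bitval (h l) 0 (m_seq (Suc r)) = m l))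
     + (\<Prod>l\<in>UNIV. of_bool (bitval (h l) 0 (m_seq (Suc r)) = m l)
          * walsh (2 ^ m_seq (Suc r) * next_freq r l (m l)) (h l))))"
    (is "_ = (\<Sum>m\<in>idx_below ?M. ?f m)")
proof -
  have "(\<Sum>m\<in>idx_below ?M. ?f m) = (\<Sum>m\<in>idx_below ?M. (\<Prod>l\<in>UNIV. of_bool (bitval (h l) 0 ?M = m l))
      * (density_at r m * (1 + (\<Prod>l\<in>UNIV. walsh (2 ^ ?M * next_freq r l (m l)) (h l)))))"
    by (intro sum.cong) (simp_all add: prod.distrib algebra_simps)
  also have "\<dots> = density (Suc r) h"
    unfolding sum_idx_below_indicator density_Suc rad_perm_walsh_eq_prod
    using density_eq_density_at[OF assms] by simp
  finally show ?thesis ..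
qed

lemma avg_walshv_density_Suc:
  assumes r1: "1 \<le> r" and k: "k0 \<le> m_seq (Suc r)"
  shows "avg K (\<lambda>h. walshv n h * density (Suc r) h) = (\<Sum>m\<in>idx_below (m_seq (Suc r)). density_at r m *
      ((\<Prod>l\<in>UNIV. ind_walsh_coeff K (m_seq (Suc r)) (m l) 0 (n l)) + (\<Prod>l\<in>UNIV. ind_walsh_coeff K (m_seq (Suc r)) (m l) (next_freq r l (m l)) (n l))))"
proof -
  define M where "M = m_seq (Suc r)"
  define F0 where "F0 = (\<lambda>m h. \<Prod>l\<in>UNIV. walsh (n l) (h l) * of_bool (bitval (h l) 0 M = m l) * walsh (2^M * 0) (h l))"
  define F1 where "F1 = (\<lambda>m h. \<Prod>l\<in>UNIV. walsh (n l) (h l) * of_bool (bitval (h l) 0 M = m l) * walsh (2^M * next_freq r l (m l)) (h l))"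
  have e: "walshv n h * density (Suc r) h = (\<Sum>m\<in>idx_below M. density_at r m * (F0 m h + F1 m h))" for h
  proof -
    have "walshv n h * density (Suc r) h = (\<Sum>m\<in>idx_below M. density_at r m *
      (walshv n h * (\<Prod>l\<in>UNIV. of_bool (bitval (h l) 0 M = m l))
     + walshv n h * (\<Prod>l\<in>UNIV. of_bool (bitval (h l) 0 M = m l) * walsh (2^M * next_freq r l (m l)) (h l))))"
      unfolding density_Suc_expand[OF r1 k, of h] M_def[symmetric] sum_distrib_left by (simp add: algebra_simps)
    also have "\<dots> = (\<Sum>m\<in>idx_below M. density_at r m * (F0 m h + F1 m h))"
      unfolding F0_def F1_def walshv_def prod.distrib[symmetric] by (simp add: mult.assoc)
    finally show ?thesis .
  qed
  have "avg K (\<lambda>h. walshv n h * density (Suc r) h) = (\<Sum>m\<in>idx_below M. density_at r m * (avg K (F0 m) + avg K (F1 m)))"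
    unfolding e by (simp add: avg_sum avg_cmult avg_add)
  also have "\<dots> = (\<Sum>m\<in>idx_below M. density_at r m *
      ((\<Prod>l\<in>UNIV. ind_walsh_coeff K M (m l) 0 (n l)) + (\<Prod>l\<in>UNIV. ind_walsh_coeff K M (m l) (next_freq r l (m l)) (n l))))"
  proof (rule sum.cong[OF refl])
    fix m
    have a0: "avg K (F0 m) = (\<Prod>l\<in>UNIV. ind_walsh_coeff K M (m l) 0 (n l))"
      unfolding F0_def ind_walsh_coeff_def
      using avg_prod[of K "\<lambda>l x. walsh (n l) x * of_bool (bitval x 0 M = m l) * walsh (2^M * 0) x"] by simp
    have a1: "avg K (F1 m) = (\<Prod>l\<in>UNIV. ind_walsh_coeff K M (m l) (next_freq r l (m l)) (n l))"
      unfolding F1_def ind_walsh_coeff_def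
      using avg_prod[of K "\<lambda>l x. walsh (n l) x * of_bool (bitval x 0 M = m l) * walsh (2^M * next_freq r l (m l)) x"] by simp
    show "density_at r m * (avg K (F0 m) + avg K (F1 m)) = density_at r m *
      ((\<Prod>l\<in>UNIV. ind_walsh_coeff K M (m l) 0 (n l)) + (\<Prod>l\<in>UNIV. ind_walsh_coeff K M (m l) (next_freq r l (m l)) (n l)))"
      unfolding a0 a1 ..
  qed
  finally show ?thesis unfolding M_def .
qed

lemma sum_box_avg_walshv_density_Suc:
  assumes r1: "1 \<le> r" and k: "k0 \<le> m_seq (Suc r)"
    and K1: "2 * m_seq (Suc r) + 1 \<le> K" and NK: "\<forall>l. N l \<le> 2^K"
  shows "(\<Sum>n\<in>{n. \<forall>l. n l < N l}. avg K (\<lambda>h. walshv n h * density (Suc r) h) * walshv n g)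
    = (\<Sum>m\<in>idx_below (m_seq (Suc r)). density_at r m *
      ((\<Prod>l\<in>UNIV. block_kernel (m_seq (Suc r)) (N l) (g l) 0 (m l))
     + (\<Prod>l\<in>UNIV. block_kernel (m_seq (Suc r)) (N l) (g l) (next_freq r l (m l)) (m l))))"
proof -
  define M where "M = m_seq (Suc r)"
  have MK: "M \<le> K" using K1 by (simp add: M_def)
  have next_freq_less: "next_freq r l \<mu> < 2^(K - M)" if "\<mu> < 2^M" for l \<mu>
  proof -
    have "\<pi> (Suc r) l \<mu> < 2^M" using pi_less[of "Suc r" \<mu> l] that by (simp add: M_def)
    then have "next_freq r l \<mu> < 2^M + 2^M" by (simp add: next_freq_def M_def)
    also have "\<dots> = 2^Suc M" by simp
    also have "\<dots> \<le> 2^(K - M)" using K1 by (intro power_increasing) (auto simp: M_def)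
    finally show ?thesis .
  qed
  have Q: "(\<Sum>j<N l. ind_walsh_coeff K M \<mu> p j * walsh j (g l)) = block_kernel M (N l) (g l) p \<mu>"
    if "\<mu> < 2^M" "p < 2^(K - M)" for l \<mu> p
    unfolding block_kernel_def by (rule sum_ind_walsh_coeff[OF MK that(1) _ that(2)]) (use NK in auto)
  have "(\<Sum>n\<in>{n. \<forall>l. n l < N l}. avg K (\<lambda>h. walshv n h * density (Suc r) h) * walshv n g)
    = (\<Sum>n\<in>{n. \<forall>l. n l < N l}. \<Sum>m\<in>idx_below M. density_at r m *
      ((\<Prod>l\<in>UNIV. ind_walsh_coeff K M (m l) 0 (n l) * walsh (n l) (g l)) + (\<Prod>l\<in>UNIV. ind_walsh_coeff K M (m l) (next_freq r l (m l)) (n l) * walsh (n l) (g l))))"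
  proof (rule sum.cong[OF refl])
    fix n :: "'d idx"
    show "avg K (\<lambda>h. walshv n h * density (Suc r) h) * walshv n g = (\<Sum>m\<in>idx_below M. density_at r m *
      ((\<Prod>l\<in>UNIV. ind_walsh_coeff K M (m l) 0 (n l) * walsh (n l) (g l)) + (\<Prod>l\<in>UNIV. ind_walsh_coeff K M (m l) (next_freq r l (m l)) (n l) * walsh (n l) (g l))))"
      unfolding avg_walshv_density_Suc[OF r1 k] M_def[symmetric]
      unfolding walshv_def sum_distrib_right prod.distrib by (simp add: algebra_simps)
  qed
  also have "\<dots> = (\<Sum>m\<in>idx_below M. density_at r m *
      ((\<Sum>n\<in>{n. \<forall>l. n l < N l}. \<Prod>l\<in>UNIV. ind_walsh_coeff K M (m l) 0 (n l) * walsh (n l) (g l))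
     + (\<Sum>n\<in>{n. \<forall>l. n l < N l}. \<Prod>l\<in>UNIV. ind_walsh_coeff K M (m l) (next_freq r l (m l)) (n l) * walsh (n l) (g l))))"
    by (subst sum.swap, rule sum.cong[OF refl]) (simp only: sum.distrib[symmetric] sum_distrib_left)
  also have "\<dots> = (\<Sum>m\<in>idx_below M. density_at r m *
      ((\<Prod>l\<in>UNIV. block_kernel M (N l) (g l) 0 (m l)) + (\<Prod>l\<in>UNIV. block_kernel M (N l) (g l) (next_freq r l (m l)) (m l))))"
  proof (rule sum.cong[OF refl])
    fix m :: "'d idx" assume m: "m \<in> idx_below M"
    then have ml: "m l < 2^M" for l by (simp add: idx_below_def)
    have z: "(0::nat) < 2^(K - M)" by simp
    show "density_at r m * ((\<Sum>n\<in>{n. \<forall>l. n l < N l}. \<Prod>l\<in>UNIV. ind_walsh_coeff K M (m l) 0 (n l) * walsh (n l) (g l))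
     + (\<Sum>n\<in>{n. \<forall>l. n l < N l}. \<Prod>l\<in>UNIV. ind_walsh_coeff K M (m l) (next_freq r l (m l)) (n l) * walsh (n l) (g l)))
      = density_at r m * ((\<Prod>l\<in>UNIV. block_kernel M (N l) (g l) 0 (m l)) + (\<Prod>l\<in>UNIV. block_kernel M (N l) (g l) (next_freq r l (m l)) (m l)))"
      using sum_box_prod[where N=N and f="\<lambda>l j. ind_walsh_coeff K M (m l) 0 j * walsh j (g l)"]
        sum_box_prod[where N=N and f="\<lambda>l j. ind_walsh_coeff K M (m l) (next_freq r l (m l)) j * walsh j (g l)"]
        Q[OF ml z] Q[OF ml next_freq_less[OF ml]] by simp
  qed
  finally show ?thesis unfolding M_def .
qed

lemma psum_eq_density_plus_remainder:
  assumes r1: "1 \<le> r" and k: "k0 \<le> m_seq (Suc r)"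
    and K1: "2 * m_seq (Suc r) + 1 \<le> K" and NK: "\<forall>l. N l \<le> 2^K" and NM: "\<forall>l. 2^(m_seq (Suc r)) \<le> N l"
  shows "(\<Sum>n\<in>{n. \<forall>l. n l < N l}. avg K (\<lambda>h. walshv n h * density (Suc r) h) * walshv n g)
    = density r g + (\<Sum>m\<in>idx_below (m_seq (Suc r)). density_at r m * (\<Prod>l\<in>UNIV. block_kernel (m_seq (Suc r)) (N l) (g l) (next_freq r l (m l)) (m l)))"
proof -
  define M where "M = m_seq (Suc r)"
  have "(\<Prod>l\<in>UNIV. block_kernel M (N l) (g l) 0 (m l)) = (\<Prod>l\<in>UNIV. of_bool (bitval (g l) 0 M = m l))"
    if "m \<in> idx_below M" for m :: "'d idx"
    using that NM block_kernel_0 by (auto simp: idx_below_def M_def intro!: prod.cong)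
  then have "(\<Sum>m\<in>idx_below M. density_at r m * ((\<Prod>l\<in>UNIV. block_kernel M (N l) (g l) 0 (m l))
     + (\<Prod>l\<in>UNIV. block_kernel M (N l) (g l) (next_freq r l (m l)) (m l))))
    = (\<Sum>m\<in>idx_below M. (\<Prod>l\<in>UNIV. of_bool (bitval (g l) 0 M = m l)) * density_at r m)
      + (\<Sum>m\<in>idx_below M. density_at r m * (\<Prod>l\<in>UNIV. block_kernel M (N l) (g l) (next_freq r l (m l)) (m l)))"
    by (simp add: distrib_left sum.distrib mult.commute)
  then show ?thesis
    using sum_box_avg_walshv_density_Suc[OF r1 k K1 NK, of g] density_eq_density_at[OF r1 k, of g]
    by (simp add: sum_idx_below_indicator M_def)
qed

lemma density_at_ne_0_imp_far:
  assumes "1 \<le> r" "k0 \<le> Suc (2 * m_seq r)" and "density r g = 0" and "density_at r m \<noteq> 0"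
  shows "\<exists>l0. \<exists>t<Suc (2 * m_seq r). g l0 t \<noteq> dint_pt (m_seq (Suc r)) (m l0) t"
proof (rule ccontr)
  assume "\<not> ?thesis"
  then have "agree (Suc (2 * m_seq r)) g (cube_pt (m_seq (Suc r)) m)"
    unfolding agree_def cube_pt_eq_dint_pt by auto
  moreover have "depends_upto (Suc (2 * m_seq r)) (density r)"
    using assms(2) by (intro depends_upto_density) auto
  ultimately have "density r g = density_at r m" unfolding density_at_def by (metis depends_uptoD)
  then show False using assms(3,4) by simp
qed

lemma remainder_bound:
  assumes r1: "1 \<le> r" and k: "k0 \<le> Suc (2 * m_seq r)" and g: "density r g = 0"
    and NM: "\<forall>l. 2^(2 * m_seq (Suc r)) \<le> N l"
  shows "\<bar>\<Sum>m\<in>idx_below (m_seq (Suc r)). density_at r m * (\<Prod>l\<in>UNIV. block_kernel (m_seq (Suc r)) (N l) (g l) (next_freq r l (m l)) (m l))\<bar>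
     \<le> 2^r * (card (UNIV::'d set) * ((2^Suc (2 * m_seq r) / 2^m_seq (Suc r)) * 2^(card (UNIV::'d set) - 1)))"
proof -
  define M where "M = m_seq (Suc r)"
  define J where "J = Suc (2 * m_seq r)"
  define d where "d = card (UNIV::'d set)"
  define q where "q = (\<lambda>l \<mu>. \<bar>block_kernel M (N l) (g l) (next_freq r l \<mu>) \<mu>\<bar>)"
  define E where "E = (\<lambda>l \<mu>. \<exists>t<J. g l t \<noteq> dint_pt M \<mu> t)"
  have pointwise: "\<bar>density_at r m\<bar> * (\<Prod>l\<in>UNIV. q l (m l))
      \<le> 2^r * (\<Sum>l0\<in>UNIV. of_bool (E l0 (m l0)) * (\<Prod>l\<in>UNIV. q l (m l)))" for m
  proof (cases "density_at r m = 0")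
    case False
    then obtain l0 where "E l0 (m l0)"
      using density_at_ne_0_imp_far[OF r1 k g False] unfolding E_def J_def M_def by blast
    then have "(\<Prod>l\<in>UNIV. q l (m l)) \<le> (\<Sum>l0\<in>UNIV. of_bool (E l0 (m l0)) * (\<Prod>l\<in>UNIV. q l (m l)))"
      using member_le_sum[of l0 UNIV "\<lambda>l0. of_bool (E l0 (m l0)) * (\<Prod>l\<in>UNIV. q l (m l))"]
      by (simp add: q_def prod_nonneg)
    moreover have "\<bar>density_at r m\<bar> \<le> 2^r" using density_nonneg density_le by (simp add: density_at_def)
    ultimately show ?thesis by (intro mult_mono) (simp_all add: q_def prod_nonneg)
  qed (simp add: q_def sum_nonneg prod_nonneg)
  have "J \<le> M" using m_seq_Suc[OF r1] by (simp add: J_def M_def)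
  then have far: "(\<Sum>m\<in>idx_below M. of_bool (E l0 (m l0)) * (\<Prod>l\<in>UNIV. q l (m l))) \<le> 2^J / 2^M * 2^(d - 1)"
    for l0
    using sum_prod_block_kernel_far[of M N "\<lambda>l. \<pi> (Suc r) l" J g l0] NM inj_on_pi[of "Suc r"]
    by (simp add: q_def E_def d_def next_freq_def M_def)
  have "\<bar>\<Sum>m\<in>idx_below M. density_at r m * (\<Prod>l\<in>UNIV. block_kernel M (N l) (g l) (next_freq r l (m l)) (m l))\<bar>
      \<le> (\<Sum>m\<in>idx_below M. \<bar>density_at r m\<bar> * (\<Prod>l\<in>UNIV. q l (m l)))"
    by (rule order_trans[OF sum_abs]) (simp add: q_def abs_mult abs_prod)
  also have "\<dots> \<le> (\<Sum>m\<in>idx_below M. 2^r * (\<Sum>l0\<in>UNIV. of_bool (E l0 (m l0)) * (\<Prod>l\<in>UNIV. q l (m l))))"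
    by (rule sum_mono) (rule pointwise)
  also have "\<dots> = 2^r * (\<Sum>l0\<in>UNIV. \<Sum>m\<in>idx_below M. of_bool (E l0 (m l0)) * (\<Prod>l\<in>UNIV. q l (m l)))"
    unfolding sum_distrib_left[symmetric] by (rule arg_cong[where f="\<lambda>x. 2^r * x"], rule sum.swap)
  also have "\<dots> \<le> 2^r * (\<Sum>l0\<in>(UNIV::'d set). 2^J / 2^M * 2^(d - 1))"
    by (intro mult_left_mono sum_mono far) simp_all
  finally show ?thesis by (simp add: M_def J_def d_def)
qed

end

section \<open>Iterated sums\<close>

definition box_on :: "'d set \<Rightarrow> nat \<Rightarrow> 'd idx set" where
  "box_on S B = {m. (\<forall>l\<in>S. m l < B) \<and> (\<forall>l. l \<notin> S \<longrightarrow> m l = 0)}"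

lemma finite_box_on: "finite (box_on S B :: 'd::finite idx set)"
proof -
  have "box_on S B = PiE (UNIV :: 'd set) (\<lambda>l. if l \<in> S then {..<B} else {0})"
    by (auto simp: box_on_def PiE_UNIV_domain Pi_def split: if_splits)
  moreover have "finite (PiE (UNIV :: 'd set) (\<lambda>l. if l \<in> S then {..<B} else {0}))"
    by (rule finite_PiE) auto
  ultimately show ?thesis by simp
qed

lemma sum_box_on_update:
  fixes F :: "'d::finite idx \<Rightarrow> real"
  assumes j: "j \<notin> S"
  shows "(\<Sum>k<A. \<Sum>m\<in>box_on S B. F (m(j := k)))
    = (\<Sum>m\<in>{m. m j < A \<and> (\<forall>l\<in>S. m l < B) \<and> (\<forall>l. l \<noteq> j \<and> l \<notin> S \<longrightarrow> m l = 0)}. F m)"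
proof -
  have "(\<Sum>k<A. \<Sum>m\<in>box_on S B. F (m(j := k))) = (\<Sum>(k, m)\<in>{..<A} \<times> box_on S B. F (m(j := k)))"
    by (rule sum.cartesian_product)
  also have "\<dots> = (\<Sum>m\<in>{m. m j < A \<and> (\<forall>l\<in>S. m l < B) \<and> (\<forall>l. l \<noteq> j \<and> l \<notin> S \<longrightarrow> m l = 0)}. F m)"
    by (rule sum.reindex_bij_witness[where i = "\<lambda>m. (m j, m(j := 0))" and j = "\<lambda>(k, m). m(j := k)"])
       (use j in \<open>auto simp: box_on_def fun_eq_iff\<close>)
  finally show ?thesis .
qed

lemma iter_sum_box_on:
  fixes f :: "'d::finite idx \<Rightarrow> real"
  assumes "distinct js" "\<And>n. (\<exists>l\<in>set js. B \<le> n l) \<Longrightarrow> f n = 0"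
  shows "iter_sum js f (\<Sum>n\<in>box_on (set js) B. f n)"
  using assms
proof (induction js arbitrary: f)
  case Nil
  have "box_on (set []) B = {(\<lambda>_. 0) :: 'd idx}" by (auto simp: box_on_def)
  then show ?case by simp
next
  case (Cons j js)
  define T where "T = (\<lambda>k. \<Sum>n\<in>box_on (set js) B. f (n(j := k)))"
  have jn: "j \<notin> set js" and dj: "distinct js" using Cons.prems by auto
  have it: "iter_sum js (\<lambda>n. f (n(j := k))) (T k)" for k
    unfolding T_def
  proof (rule Cons.IH[OF dj])
    fix n :: "'d idx" assume "\<exists>l\<in>set js. B \<le> n l"
    then obtain l where l: "l \<in> set js" "B \<le> n l" by blast
    then have "l \<noteq> j" using jn by auto
    then have "\<exists>l\<in>set (j # js). B \<le> (n(j := k)) l" using l by auto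
    then show "f (n(j := k)) = 0" by (rule Cons.prems(2))
  qed
  have Tz: "T k = 0" if "k \<notin> {..<B}" for k
  proof -
    have "f (n(j := k)) = 0" for n using that by (intro Cons.prems(2)) auto
    then show ?thesis by (simp add: T_def)
  qed
  have "T sums (\<Sum>k\<in>{..<B}. T k)" by (rule sums_finite) (use Tz in auto)
  also have "(\<Sum>k\<in>{..<B}. T k) = (\<Sum>n\<in>box_on (set (j # js)) B. f n)"
  proof -
    have "(\<Sum>k\<in>{..<B}. T k) = (\<Sum>m\<in>{m. m j < B \<and> (\<forall>l\<in>set js. m l < B) \<and> (\<forall>l. l \<noteq> j \<and> l \<notin> set js \<longrightarrow> m l = 0)}. f m)"
      unfolding T_def by (rule sum_box_on_update[OF jn])
    also have "{m. m j < B \<and> (\<forall>l\<in>set js. m l < B) \<and> (\<forall>l. l \<noteq> j \<and> l \<notin> set js \<longrightarrow> m l = 0)} = box_on (set (j # js)) B"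
      by (auto simp: box_on_def)
    finally show ?thesis .
  qed
  finally show ?case using it by auto
qed

lemma sum_lessThan_box_on:
  fixes f :: "'d::finite idx \<Rightarrow> real"
  assumes j: "j \<notin> set js" "set js = UNIV - {j}"
    and vanish: "\<And>k n. n j = k \<Longrightarrow> (\<exists>l. B k \<le> n l) \<Longrightarrow> f n = 0"
    and Bs: "\<forall>k<A. B k \<le> Bs"
  shows "(\<Sum>k<A. \<Sum>n\<in>box_on (set js) (B k). f (n(j := k)))
       = (\<Sum>n\<in>{n. \<forall>l. n l < (if l = j then A else Bs)}. f n)"
proof -
  have "(\<Sum>n\<in>box_on (set js) (B k). f (n(j := k))) = (\<Sum>n\<in>box_on (set js) Bs. f (n(j := k)))"
    if "k < A" for k
  proof (rule sum.mono_neutral_left[OF finite_box_on])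
    show "box_on (set js) (B k) \<subseteq> box_on (set js) Bs"
      using Bs that by (auto simp: box_on_def intro: less_le_trans)
    show "\<forall>i\<in>box_on (set js) Bs - box_on (set js) (B k). f (i(j := k)) = 0"
    proof
      fix i assume "i \<in> box_on (set js) Bs - box_on (set js) (B k)"
      then obtain l where "l \<in> set js" "B k \<le> i l" by (auto simp: box_on_def not_less)
      then show "f (i(j := k)) = 0" using j(1) by (intro vanish[of _ k]) (auto intro!: exI[of _ l])
    qed
  qed
  then have "(\<Sum>k<A. \<Sum>n\<in>box_on (set js) (B k). f (n(j := k)))
      = (\<Sum>k<A. \<Sum>n\<in>box_on (set js) Bs. f (n(j := k)))" by simp
  also have "\<dots> = (\<Sum>m\<in>{m. m j < A \<and> (\<forall>l\<in>set js. m l < Bs) \<and> (\<forall>l. l \<noteq> j \<and> l \<notin> set js \<longrightarrow> m l = 0)}. f m)"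
    by (rule sum_box_on_update[OF j(1)])
  also have "{m. m j < A \<and> (\<forall>l\<in>set js. m l < Bs) \<and> (\<forall>l. l \<noteq> j \<and> l \<notin> set js \<longrightarrow> m l = 0)}
      = {n. \<forall>l. n l < (if l = j then A else Bs)}"
    using j(2) by auto
  finally show ?thesis .
qed

text \<open>If the coefficients vanish outside a finite box once one index is fixed, every inner iterated
  sum is a finite sum, and the partial sums of the outermost series are rectangular partial sums.\<close>

lemma iter_sum_eq_0_of_rect:
  fixes f :: "'d::finite idx \<Rightarrow> real"
  assumes H1: "\<And>j x. \<exists>B. \<forall>n. n j = x \<longrightarrow> (\<exists>l. B \<le> n l) \<longrightarrow> f n = 0"
    and H2: "\<And>\<epsilon>. \<epsilon> > 0 \<Longrightarrow> \<exists>K. \<forall>N. (\<forall>l. K \<le> N l) \<longrightarrow> \<bar>\<Sum>n\<in>{n. \<forall>l. n l < N l}. f n\<bar> < \<epsilon>"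
    and js: "distinct js" "set js = UNIV"
  shows "iter_sum js f 0"
proof (cases js)
  case (Cons j js')
  have jn: "j \<notin> set js'" and dj: "distinct js'" and sj: "set js' = UNIV - {j}" using js Cons by auto
  define B where "B = (\<lambda>k. SOME B. \<forall>n. n j = k \<longrightarrow> (\<exists>l. B \<le> n l) \<longrightarrow> f n = 0)"
  have vanish: "n j = k \<Longrightarrow> (\<exists>l. B k \<le> n l) \<Longrightarrow> f n = 0" for n k
    using someI_ex[OF H1[of j k]] unfolding B_def by blast
  define T where "T = (\<lambda>k. \<Sum>n\<in>box_on (set js') (B k). f (n(j := k)))"
  have "iter_sum js' (\<lambda>n. f (n(j := k))) (T k)" for k
    unfolding T_def
  proof (rule iter_sum_box_on[OF dj])
    fix n :: "'d idx" assume "\<exists>l\<in>set js'. B k \<le> n l"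
    then obtain l where "l \<in> set js'" "B k \<le> n l" by blast
    then show "f (n(j := k)) = 0" using jn by (intro vanish[of _ k]) (auto intro!: exI[of _ l])
  qed
  moreover have "T sums 0"
    unfolding sums_def
  proof (rule LIMSEQ_I)
    fix r :: real assume "0 < r"
    then obtain K where K: "\<forall>N. (\<forall>l. K \<le> N l) \<longrightarrow> \<bar>\<Sum>n\<in>{n. \<forall>l. n l < N l}. f n\<bar> < r"
      using H2 by blast
    show "\<exists>no. \<forall>n\<ge>no. norm ((\<Sum>k<n. T k) - 0) < r"
    proof (intro exI allI impI)
      fix A assume "K \<le> A"
      define Bs where "Bs = A + (\<Sum>k<A. B k)"
      have Bs: "\<forall>k<A. B k \<le> Bs" using member_le_sum[of _ "{..<A}" B] by (simp add: Bs_def trans_le_add2)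
      have "(\<Sum>k<A. T k) = (\<Sum>n\<in>{n. \<forall>l. n l < (if l = j then A else Bs)}. f n)"
        unfolding T_def using Bs by (intro sum_lessThan_box_on[OF jn sj]) (auto intro: vanish)
      moreover have "\<forall>l. K \<le> (if l = j then A else Bs)" using \<open>K \<le> A\<close> by (simp add: Bs_def)
      ultimately show "norm ((\<Sum>k<A. T k) - 0) < r" using K by simp
    qed
  qed
  ultimately show ?thesis using Cons by auto
qed (use js in auto)

lemma conv_cube_of_conv_rect: "conv_rect a g 0 \<Longrightarrow> conv_cube a g 0"
  unfolding conv_rect_def conv_cube_def by (rule LIMSEQ_I) (metis diff_zero real_norm_def)

lemma rectangle_between_stages:
  fixes N :: "'d::finite idx"
  assumes "\<forall>l. 2 ^ (2 * m_seq (Suc R)) < N l"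
  obtains r l0 where "R \<le> r" "\<forall>l. 2 ^ (2 * m_seq (Suc r)) < N l" "N l0 \<le> 2 ^ (2 * m_seq (Suc (Suc r)))"
proof -
  define x where "x = Min (range N)"
  have "x \<in> range N" unfolding x_def by (rule Min_in) auto
  then obtain l0 where l0: "N l0 = x" by auto
  have x_le: "x \<le> N l" for l by (simp add: x_def)
  define P where "P = (\<lambda>t. x \<le> 2 ^ (2 * m_seq (Suc (Suc t))))"
  have "P x"
  proof -
    have "x < 2 ^ x" by (rule less_exp)
    also have "(2::nat) ^ x \<le> 2 ^ (2 * m_seq (Suc (Suc x)))"
      using m_seq_ge[of "Suc (Suc x)"] by (intro power_increasing) auto
    finally show ?thesis by (simp add: P_def)
  qed
  define r where "r = (LEAST t. P t)"
  have Pr: "P r" unfolding r_def by (rule LeastI[of P, OF \<open>P x\<close>])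
  have "2 ^ (2 * m_seq (Suc r)) < x"
  proof (cases r)
    case (Suc r')
    then show ?thesis using not_less_Least[of r' P] by (simp add: r_def P_def)
  next
    case 0
    have "(1::nat) \<le> 2 ^ (2 * m_seq (Suc R))" by simp
    then have "1 < x" using assms[rule_format, of l0] l0 by linarith
    with 0 show ?thesis by simp
  qed
  moreover have "R \<le> r"
  proof (rule ccontr)
    assume "\<not> R \<le> r"
    then have "m_seq (Suc (Suc r)) \<le> m_seq (Suc R)" by (intro m_seq_mono) auto
    then have "(2::nat) ^ (2 * m_seq (Suc (Suc r))) \<le> 2 ^ (2 * m_seq (Suc R))"
      by (intro power_increasing) auto
    then show False using Pr assms[rule_format, of l0] l0 by (simp add: P_def)
  qed
  ultimately show ?thesis using that[of r l0] Pr l0 x_le by (auto simp: P_def intro: less_le_trans)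
qed

context perm_seq_cube
begin

lemma psum_tau_coeff_eq:
  assumes r: "2 \<le> r" "k0 \<le> r" and low: "\<forall>l. 2 ^ (2 * m_seq (Suc r)) < N l"
    and high: "N l0 \<le> 2 ^ (2 * m_seq (Suc (Suc r)))"
  shows "psum tau_coeff N g = density r g + (\<Sum>m\<in>idx_below (m_seq (Suc r)). density_at r m
      * (\<Prod>l\<in>UNIV. block_kernel (m_seq (Suc r)) (N l) (g l) (next_freq r l (m l)) (m l)))"
proof -
  define K where "K = k0 + 2 * m_seq (Suc r) + 2 + (\<Sum>l\<in>UNIV. N l)"
  have N_le: "N l \<le> 2 ^ K" for l
  proof -
    have "N l \<le> (\<Sum>l\<in>UNIV. N l)" by (rule member_le_sum) auto
    also have "\<dots> < 2 ^ K" using less_exp[of K] by (simp add: K_def)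
    finally show ?thesis by simp
  qed
  have r1: "1 \<le> r" and mr: "r \<le> m_seq r" using r m_seq_ge by auto
  have "Suc (Suc r) \<le> m_seq (Suc (Suc r))" by (rule m_seq_ge) simp
  then have "tau_coeff n = avg K (\<lambda>h. walshv n h * density (Suc r) h)" if "\<forall>l. n l < N l" for n
  proof -
    have "n l0 < 2 ^ (2 * m_seq (Suc (Suc r)))" using that high by (auto intro: less_le_trans)
    then have "tau_coeff n = density_coeff (Suc r) n"
      by (rule tau_coeff_eq) (use \<open>Suc (Suc r) \<le> _\<close> r in linarith)
    moreover have "n \<in> idx_below K" using that N_le by (auto simp: idx_below_def intro: less_le_trans)
    ultimately show ?thesis
      using avg_walshv_density depends_upto_density[of K "Suc r"] by (simp add: K_def)
  qed
  then have "psum tau_coeff N g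
      = (\<Sum>n\<in>{n. \<forall>l. n l < N l}. avg K (\<lambda>h. walshv n h * density (Suc r) h) * walshv n g)"
    unfolding psum_def by (intro sum.cong) simp_all
  also have "\<dots> = density r g + (\<Sum>m\<in>idx_below (m_seq (Suc r)). density_at r m
      * (\<Prod>l\<in>UNIV. block_kernel (m_seq (Suc r)) (N l) (g l) (next_freq r l (m l)) (m l)))"
  proof (rule psum_eq_density_plus_remainder[OF r1])
    show "k0 \<le> m_seq (Suc r)" using m_seq_Suc[OF r1] r(2) mr by simp
    show "\<forall>l. 2 ^ m_seq (Suc r) \<le> N l"
    proof
      fix l
      have "(2::nat) ^ m_seq (Suc r) \<le> 2 ^ (2 * m_seq (Suc r))" by (intro power_increasing) auto
      then show "2 ^ m_seq (Suc r) \<le> N l" using low[rule_format, of l] by linarith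
    qed
  qed (use N_le in \<open>simp_all add: K_def\<close>)
  finally show ?thesis .
qed

lemma psum_tau_coeff_bound:
  assumes r: "2 \<le> r" "k0 \<le> r" and low: "\<forall>l. 2 ^ (2 * m_seq (Suc r)) < N l"
    and high: "N l0 \<le> 2 ^ (2 * m_seq (Suc (Suc r)))" and g: "density r g = 0"
  shows "\<bar>psum tau_coeff N g\<bar> \<le> card (UNIV :: 'd set) * 2 ^ (card (UNIV :: 'd set) - 1) / 2 ^ r"
proof -
  define C :: real where "C = card (UNIV :: 'd set) * 2 ^ (card (UNIV :: 'd set) - 1)"
  have r1: "1 \<le> r" and mr: "r \<le> m_seq r" using r m_seq_ge by auto
  have "\<bar>psum tau_coeff N g\<bar>
      \<le> 2 ^ r * (C * (2 ^ Suc (2 * m_seq r) / 2 ^ m_seq (Suc r)))"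
    using psum_tau_coeff_eq[OF r low high] remainder_bound[OF r1 _ g, of N] low r(2) mr g
    by (simp add: C_def less_imp_le mult_ac)
  also have "(2::real) ^ Suc (2 * m_seq r) / 2 ^ m_seq (Suc r) = 1 / 2 ^ (2 * m_seq r + 1)"
    using m_seq_Suc[OF r1] by (simp add: power_add[symmetric] field_simps)
  also have "(2::real) ^ r * (C * (1 / 2 ^ (2 * m_seq r + 1))) \<le> C / 2 ^ r"
  proof -
    have "(2::real) ^ r * 2 ^ r \<le> 2 ^ (2 * m_seq r + 1)"
      unfolding power_add[symmetric] using mr by (intro power_increasing) auto
    then have "C * (2 ^ r * 2 ^ r) \<le> C * 2 ^ (2 * m_seq r + 1)"
      by (intro mult_left_mono) (simp_all add: C_def)
    then show ?thesis by (simp add: field_simps)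
  qed
  finally show ?thesis by (simp add: C_def)
qed

theorem conv_rect_tau_coeff:
  assumes "\<exists>r0. \<forall>r\<ge>r0. density r g = 0"
  shows "conv_rect tau_coeff g 0"
  unfolding conv_rect_def
proof (intro allI impI)
  fix \<epsilon> :: real assume "0 < \<epsilon>"
  define C :: real where "C = card (UNIV :: 'd set) * 2 ^ (card (UNIV :: 'd set) - 1)"
  obtain r0 where r0: "\<forall>r\<ge>r0. density r g = 0" using assms by blast
  obtain n0 :: nat where n0: "C / \<epsilon> < n0" using reals_Archimedean2 by blast
  define R where "R = r0 + k0 + n0 + 2"
  show "\<exists>K. \<forall>N. (\<forall>l. K \<le> N l) \<longrightarrow> \<bar>psum tau_coeff N g - 0\<bar> < \<epsilon>"
  proof (intro exI allI impI)
    fix N :: "'d idx" assume "\<forall>l. Suc (2 ^ (2 * m_seq (Suc R))) \<le> N l"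
    then obtain r l0 where "R \<le> r" "\<forall>l. 2 ^ (2 * m_seq (Suc r)) < N l"
      "N l0 \<le> 2 ^ (2 * m_seq (Suc (Suc r)))"
      using rectangle_between_stages[of R N] by (auto simp: Suc_le_eq)
    then have "\<bar>psum tau_coeff N g\<bar> \<le> C / 2 ^ r"
      using psum_tau_coeff_bound r0 by (simp add: C_def R_def)
    also have "\<dots> < \<epsilon>"
    proof -
      have "real n0 \<le> r" using \<open>R \<le> r\<close> by (simp add: R_def)
      moreover have "real r < 2 ^ r"
        by (metis less_exp of_nat_less_numeral_power_cancel_iff of_nat_numeral)
      ultimately have "C / \<epsilon> < 2 ^ r" using n0 by linarith
      then show ?thesis using \<open>0 < \<epsilon>\<close> by (simp add: field_simps)
    qed
    finally show "\<bar>psum tau_coeff N g - 0\<bar> < \<epsilon>" by simp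
  qed
qed

end

context perm_seq_cube
begin

lemma conv_rect_tau_coeff_outside: "g \<notin> dcube k0 m0 \<inter> F_pi \<pi> \<Longrightarrow> conv_rect tau_coeff g 0"
  by (rule conv_rect_tau_coeff[OF density_eventually_zero])

lemma conv_rep_tau_coeff_outside:
  assumes "g \<notin> dcube k0 m0 \<inter> F_pi \<pi>" and "distinct js" "set js = UNIV"
  shows "conv_rep js tau_coeff g 0"
  unfolding conv_rep_def
proof (rule iter_sum_eq_0_of_rect[OF _ _ assms(2,3)])
  fix j x
  obtain B where "\<forall>n. n j = x \<longrightarrow> (\<exists>l. B \<le> n l) \<longrightarrow> tau_coeff n = 0" using tau_coeff_support by blast
  then show "\<exists>B. \<forall>n. n j = x \<longrightarrow> (\<exists>l. B \<le> n l) \<longrightarrow> tau_coeff n * walshv n g = 0" by auto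
next
  fix \<epsilon> :: real assume "0 < \<epsilon>"
  then show "\<exists>K. \<forall>N. (\<forall>l. K \<le> N l) \<longrightarrow> \<bar>\<Sum>n\<in>{n. \<forall>l. n l < N l}. tau_coeff n * walshv n g\<bar> < \<epsilon>"
    using conv_rect_tau_coeff_outside[OF assms(1)] unfolding conv_rect_def psum_def by simp
qed

theorem realizes_tau_coeff:
  assumes "dcube k0 m0 \<inter> F_pi \<pi> \<subseteq> A" and "dcube k0 m0 \<inter> F_pi \<pi> \<noteq> {}"
  shows "realizes conv_rect tau_coeff A" "realizes conv_cube tau_coeff A"
    and "distinct js \<Longrightarrow> set js = UNIV \<Longrightarrow> realizes (conv_rep js) tau_coeff A"
proof -
  have "\<exists>n. tau_coeff n \<noteq> 0" using tau_coeff_0_ne_0 assms(2) by blast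
  moreover have outside: "g \<notin> A \<Longrightarrow> g \<notin> dcube k0 m0 \<inter> F_pi \<pi>" for g using assms(1) by blast
  ultimately show "realizes conv_rect tau_coeff A" "realizes conv_cube tau_coeff A"
    and "distinct js \<Longrightarrow> set js = UNIV \<Longrightarrow> realizes (conv_rep js) tau_coeff A"
    unfolding realizes_def
    by (auto intro: conv_rect_tau_coeff_outside conv_cube_of_conv_rect conv_rep_tau_coeff_outside)
qed

end

lemma open_dyadic_fine_cubes:
  assumes "open_dyadic G" and "g \<in> G"
  obtains k where "\<And>K. k \<le> K \<Longrightarrow> dcube K (\<lambda>l. bitval (g l) 0 K) \<subseteq> G"
proof -
  obtain k m where m: "m \<in> idx_below k" "g \<in> dcube k m" "dcube k m \<subseteq> G"
    using assms unfolding open_dyadic_def by blast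
  have "dcube K (\<lambda>l. bitval (g l) 0 K) \<subseteq> G" if "k \<le> K" for K
  proof
    fix h assume "h \<in> dcube K (\<lambda>l. bitval (g l) 0 K)"
    then have "agree K h g"
      using agree_cube_pt[OF bitval_mem_idx_below] agree_cube_pt_bitval agree_sym agree_trans by metis
    then have "h \<in> dcube k m" using agree_mem_dcube_iff[OF m(1) _ that] m(2) by blast
    then show "h \<in> G" using m(3) by blast
  qed
  then show ?thesis using that by blast
qed

theorem theorem6:
  fixes \<pi> :: "nat \<Rightarrow> 'd::finite \<Rightarrow> nat \<Rightarrow> nat"
    and G :: "'d pt set"
  assumes "card (UNIV :: 'd set) \<ge> 2"
    and "\<forall>s\<ge>1. \<forall>l. bij_betw (\<pi> s l) {..<2 ^ m_seq s} {..<2 ^ m_seq s}"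
    and "open_dyadic G"
    and "G \<inter> F_pi \<pi> \<noteq> {}"
  shows "M_set conv_rect (G \<inter> F_pi \<pi>)
       \<and> M_set conv_cube (G \<inter> F_pi \<pi>)
       \<and> (\<forall>js. distinct js \<and> set js = UNIV \<longrightarrow> M_set (conv_rep js) (G \<inter> F_pi \<pi>))
       \<and> (\<exists>s0\<ge>1. \<exists>m0\<in>idx_below (m_seq s0). dcube (m_seq s0) m0 \<subseteq> G \<and>
            (let a = qm_coeff (qm_restrict (tauE (F_pi \<pi>)) (m_seq s0) m0)
             in realizes conv_rect a (G \<inter> F_pi \<pi>)
              \<and> realizes conv_cube a (G \<inter> F_pi \<pi>)
              \<and> (\<forall>js. distinct js \<and> set js = UNIV \<longrightarrow> realizes (conv_rep js) a (G \<inter> F_pi \<pi>))))"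
proof -
  obtain g where g: "g \<in> G" "g \<in> F_pi \<pi>" using assms(4) by blast
  obtain k where k: "\<And>K. k \<le> K \<Longrightarrow> dcube K (\<lambda>l. bitval (g l) 0 K) \<subseteq> G"
    using open_dyadic_fine_cubes[OF assms(3) g(1)] by blast
  define s0 where "s0 = k + 2"
  define m0 where "m0 = (\<lambda>l. bitval (g l) 0 (m_seq s0))"
  have "s0 \<le> m_seq s0" by (rule m_seq_ge) (simp add: s0_def)
  then have s0: "1 \<le> s0" "m0 \<in> idx_below (m_seq s0)" "dcube (m_seq s0) m0 \<subseteq> G"
    unfolding m0_def using k bitval_mem_idx_below by (auto simp: s0_def simp del: m_seq.simps)
  interpret perm_seq_cube \<pi> "m_seq s0" m0
    by unfold_locales (use assms(2) s0(2) in auto)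
  have "g \<in> dcube (m_seq s0) m0"
    unfolding m0_def by (rule agree_cube_pt_imp_mem_dcube[OF bitval_mem_idx_below agree_cube_pt_bitval])
  then have "realizes conv_rect tau_coeff (G \<inter> F_pi \<pi>)" "realizes conv_cube tau_coeff (G \<inter> F_pi \<pi>)"
    "\<forall>js. distinct js \<and> set js = UNIV \<longrightarrow> realizes (conv_rep js) tau_coeff (G \<inter> F_pi \<pi>)"
    using realizes_tau_coeff[of "G \<inter> F_pi \<pi>"] s0(3) g(2) by blast+
  then show ?thesis unfolding M_set_def tau_coeff_def Let_def using s0 by blast
qed

end
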